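(* Let $D$ and $D'$ be oriented knotoid diagrams representing the same spherical knotoid. Then $\langle D\rangle_L=\langle D'\rangle_L$ in the module $S(G)$.
   Context: A knotoid diagram is the image of a generic immersion of $[0,1]$ in $\mathbb{R}^2$ (endpoints distinct from double points) with every double point endowed with over/under crossing information; it is oriented from $0$ to $1$. A spherical knotoid is an equivalence class of knotoid diagrams, viewed in $S^2=\mathbb{R}^2\cup\{\infty\}$, modulo isotopy and Reidemeister moves in $S^2$ (performed in disks not containing the endpoints); equivalently, planar knotoids modulo the additional "pulling over infinity" move, which moves an arc of the diagram across the point $\infty$. Knotoid label graphs. A knotoid label graph is a planar connected graph having $2n$ trivalent vertices ($n$ a nonnegative integer) and, in addition, two univalent endpoint vertices: a tail, whose single (thick) edge leaves it, and a head, whose single (thick) edge enters it. Each trivalent vertex is an empty or a solid circle; each edge is thin or thick, exactly one thin edge at each trivalent vertex; thick edges are oriented (closed thick loops allowed). At a trivalent vertex either the thick edges are coherently oriented and the thin edge unoriented, or both thick edges enter or both leave and the thin edge is oriented so that the in-degree is $0$ or $3$. Smoothing. For an oriented knotoid diagram $D$ with $n$ crossings: at a crossing, the oriented smoothing (arcs coherently oriented) and the disoriented smoothing (one arc has both ends pointing towards the site, the other both away). For a positive crossing the $A$-smoothing is oriented and the $B$-smoothing disoriented; for a negative crossing the $A$-smoothing is disoriented and $B$ oriented. Smoothing: replace the crossing by a smoothing (thick arcs, inherited orientations), join the arcs by a new thin segment whose endpoints are new vertices, both empty for $A$, both solid for $B$; unoriented for the oriented smoothing, otherwise oriented from the vertex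 whose thick edges both leave to the vertex whose thick edges both enter. A state $s$ chooses $A$ or $B$ at each crossing; $G_s(D)$ is the resulting knotoid label graph. For a tangle $T$ in a disk, $\langle T\rangle$ is the formal sum over states of its smoothed pictures. $S(G)$ is the $\mathbb{Z}$-module generated by knotoid label graphs modulo the "pulling over infinity" move for graphs (moving an edge across $\infty$) and the local relations $\langle T\rangle=\langle T'\rangle$ for (R1.1) $T$ a one-crossing curl with positive crossing, $T'$ an arc; (R1.2) same with negative crossing; (R2.1)–(R2.4) $T$ the two-crossing tangle of the second Reidemeister move, $T'$ two crossingless strands, in four oriented versions (same direction, either on top; opposite, either on top); (R3.1) $T,T'$ the two sides of an oriented third Reidemeister move, orientations fixed so that these oriented moves generate all oriented Reidemeister moves. The label bracket is $\langle D\rangle_L=\sum_s G_s(D)\in S(G)$ over all $2^n$ states. *)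

theory Defs
  imports Main "HOL-Library.Function_Algebras"
begin

text \<open>
All diagrams and graphs living in the 2-sphere are encoded as
decorated combinatorial maps (rotation systems): a finite set of darts (half-edges),
a fixed-point-free involution alph (the two halves of an edge), and a permutation sig
(counterclockwise rotation of the darts around their vertex).  A connected map is
embedded in the sphere iff V - E + F = 2; two embedded graphs are isotopic in the
sphere iff the maps are isomorphic.  This automatically builds in the
"pulling over infinity" move.  Bivalent vertices of kind Mark are auxiliary
subdivision points of an edge (the quotient by subdivision is always imposed).
\<close>

datatype vkind = Tail | Head | Cross | EmptyV | SolidV | Mark | Bdry

text \<open>Direction of the edge seen from a dart: Out = the edge leaves the vertex of the
dart, In = it enters it, Unor = unoriented edge.\<close>
datatype edir = In | Out | Unor

fun opp :: "edir \<Rightarrow> edir" where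
  "opp In = Out" | "opp Out = In" | "opp Unor = Unor"

record dmap =
  darts :: "nat set"
  alph :: "nat \<Rightarrow> nat"
  sig :: "nat \<Rightarrow> nat"
  vk :: "nat \<Rightarrow> vkind"      \<comment> \<open>kind of the vertex the dart is attached to\<close>
  dr :: "nat \<Rightarrow> edir"
  thick :: "nat \<Rightarrow> bool"
  over :: "nat \<Rightarrow> bool"     \<comment> \<open>at a crossing: the dart belongs to the over strand\<close>

definition orb :: "(nat \<Rightarrow> nat) \<Rightarrow> nat \<Rightarrow> nat set" where
  "orb f d = range (\<lambda>n. (f ^^ n) d)"

definition deg :: "dmap \<Rightarrow> nat \<Rightarrow> nat" where
  "deg M d = card (orb (sig M) d)"

definition adj :: "dmap \<Rightarrow> (nat \<times> nat) set" where
  "adj M = {(x, sig M x) | x. x \<in> darts M} \<union> {(x, alph M x) | x. x \<in> darts M}"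

definition connected_map :: "dmap \<Rightarrow> bool" where
  "connected_map M \<longleftrightarrow> (\<forall>d\<in>darts M. \<forall>e\<in>darts M. (d, e) \<in> (adj M)\<^sup>*)"

definition spherical_map :: "dmap \<Rightarrow> bool" where
  "spherical_map M \<longleftrightarrow>
     int (card (orb (sig M) ` darts M)) - int (card (darts M) div 2)
       + int (card (orb (sig M \<circ> alph M) ` darts M)) = 2"

definition wf_map :: "dmap \<Rightarrow> bool" where
  "wf_map M \<longleftrightarrow>
     finite (darts M) \<and>
     (\<forall>d\<in>darts M. alph M d \<in> darts M \<and> alph M (alph M d) = d \<and> alph M d \<noteq> d) \<and>
     bij_betw (sig M) (darts M) (darts M) \<and>
     (\<forall>d\<in>darts M. vk M (sig M d) = vk M d \<and> thick M (alph M d) = thick M d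
                    \<and> dr M (alph M d) = opp (dr M d)) \<and>
     connected_map M \<and> spherical_map M"

text \<open>Isomorphism of decorated maps = orientation preserving homeomorphism of the sphere
(= isotopy in S^2) respecting all decorations.\<close>
definition iso :: "dmap \<Rightarrow> dmap \<Rightarrow> bool" where
  "iso M M' \<longleftrightarrow> (\<exists>\<phi>. bij_betw \<phi> (darts M) (darts M') \<and>
     (\<forall>d\<in>darts M. \<phi> (alph M d) = alph M' (\<phi> d) \<and> \<phi> (sig M d) = sig M' (\<phi> d)
        \<and> vk M' (\<phi> d) = vk M d \<and> dr M' (\<phi> d) = dr M d
        \<and> thick M' (\<phi> d) = thick M d \<and> over M' (\<phi> d) = over M d))"

subsection \<open>Knotoid diagrams\<close>

text \<open>Traversal of the curve: along an edge in its direction, and straight through a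
crossing (to the opposite dart) or through a subdivision point.\<close>
definition trav :: "dmap \<Rightarrow> (nat \<times> nat) set" where
  "trav M = {(x, alph M x) | x. x \<in> darts M \<and> dr M x = Out}
          \<union> {(x, sig M (sig M x)) | x. x \<in> darts M \<and> dr M x = In \<and> vk M x = Cross}
          \<union> {(x, sig M x) | x. x \<in> darts M \<and> dr M x = In \<and> vk M x = Mark}"

text \<open>Oriented knotoid diagram in S^2 (possibly carrying subdivision points Mark).\<close>
definition is_kd :: "dmap \<Rightarrow> bool" where
  "is_kd M \<longleftrightarrow> wf_map M \<and>
     (\<forall>d\<in>darts M. vk M d \<in> {Tail, Head, Cross, Mark} \<and> thick M d \<and> dr M d \<noteq> Unor) \<and>
     (\<exists>!d. d \<in> darts M \<and> vk M d = Tail) \<and> (\<exists>!d. d \<in> darts M \<and> vk M d = Head) \<and>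
     (\<forall>d\<in>darts M. vk M d = Tail \<longrightarrow> deg M d = 1 \<and> dr M d = Out) \<and>
     (\<forall>d\<in>darts M. vk M d = Head \<longrightarrow> deg M d = 1 \<and> dr M d = In) \<and>
     (\<forall>d\<in>darts M. vk M d = Cross \<longrightarrow> deg M d = 4
         \<and> dr M (sig M (sig M d)) = opp (dr M d)
         \<and> over M (sig M (sig M d)) = over M d \<and> over M (sig M d) \<noteq> over M d) \<and>
     (\<forall>d\<in>darts M. vk M d = Mark \<longrightarrow> deg M d = 2 \<and> dr M (sig M d) = opp (dr M d)) \<and>
     (\<forall>d\<in>darts M. vk M d \<noteq> Cross \<longrightarrow> \<not> over M d) \<and>
     (\<forall>t\<in>darts M. vk M t = Tail \<longrightarrow> darts M \<subseteq> (trav M)\<^sup>* `` {t})"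

definition no_marks :: "dmap \<Rightarrow> bool" where
  "no_marks M \<longleftrightarrow> (\<forall>d\<in>darts M. vk M d \<noteq> Mark)"

subsection \<open>Knotoid label graphs\<close>

definition is_lg :: "dmap \<Rightarrow> bool" where
  "is_lg G \<longleftrightarrow> wf_map G \<and>
     (\<forall>d\<in>darts G. vk G d \<in> {Tail, Head, EmptyV, SolidV, Mark} \<and> \<not> over G d) \<and>
     (\<forall>d\<in>darts G. thick G d \<longrightarrow> dr G d \<noteq> Unor) \<and>
     (\<exists>!d. d \<in> darts G \<and> vk G d = Tail) \<and> (\<exists>!d. d \<in> darts G \<and> vk G d = Head) \<and>
     (\<forall>d\<in>darts G. vk G d = Tail \<longrightarrow> deg G d = 1 \<and> thick G d \<and> dr G d = Out) \<and>
     (\<forall>d\<in>darts G. vk G d = Head \<longrightarrow> deg G d = 1 \<and> thick G d \<and> dr G d = In) \<and>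
     (\<forall>d\<in>darts G. vk G d \<in> {EmptyV, SolidV} \<longrightarrow> deg G d = 3 \<and>
         card {e \<in> orb (sig G) d. \<not> thick G e} = 1 \<and>
         (\<forall>e\<in>orb (sig G) d. \<not> thick G e \<longrightarrow>
            (let a = sig G e; b = sig G (sig G e) in
              (dr G a = opp (dr G b) \<and> dr G e = Unor) \<or> (dr G a = dr G b \<and> dr G e = dr G a)))) \<and>
     (\<forall>d\<in>darts G. vk G d = Mark \<longrightarrow> deg G d = 2 \<and> thick G (sig G d) = thick G d
                                   \<and> dr G (sig G d) = opp (dr G d))"

subsection \<open>Subdivision (insertion of a bivalent point into the edge of dart x)\<close>

definition subdivide :: "dmap \<Rightarrow> nat \<Rightarrow> nat \<Rightarrow> nat \<Rightarrow> dmap" where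
  "subdivide M x a b =
     M\<lparr>darts := darts M \<union> {a, b},
       alph := (\<lambda>d. if d = x then a else if d = a then x else if d = b then alph M x
                    else if d = alph M x then b else alph M d),
       sig := (\<lambda>d. if d = a then b else if d = b then a else sig M d),
       vk := (\<lambda>d. if d = a \<or> d = b then Mark else vk M d),
       dr := (\<lambda>d. if d = a then opp (dr M x) else if d = b then dr M x else dr M d),
       thick := (\<lambda>d. if d = a \<or> d = b then thick M x else thick M d),
       over := (\<lambda>d. if d = a \<or> d = b then False else over M d)\<rparr>"

definition subdiv :: "dmap \<Rightarrow> dmap \<Rightarrow> bool" where
  "subdiv M M' \<longleftrightarrow> (\<exists>x a b. x \<in> darts M \<and> a \<notin> darts M \<and> b \<notin> darts M \<and> a \<noteq> b
                          \<and> iso M' (subdivide M x a b))"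

subsection \<open>Gluing a tangle into a context\<close>

text \<open>A tangle in a disk is a map in which the complement of the disk is collapsed to one
vertex of kind Bdry; a context is a map in which the disk is collapsed to one vertex of
kind Bdry.  Gluing = connected sum at these two vertices, matching the boundary darts by
m with reversed cyclic order.\<close>

definition bdarts :: "dmap \<Rightarrow> nat set" where
  "bdarts M = {d \<in> darts M. vk M d = Bdry}"

definition glue_ok :: "dmap \<Rightarrow> dmap \<Rightarrow> (nat \<Rightarrow> nat) \<Rightarrow> bool" where
  "glue_ok T C m \<longleftrightarrow> wf_map T \<and> wf_map C \<and>
     (\<exists>x\<in>bdarts T. bdarts T = orb (sig T) x) \<and>
     bij_betw m (bdarts T) (bdarts C) \<and>
     (\<forall>x\<in>bdarts T. sig C (m (sig T x)) = m x) \<and>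
     (\<forall>x\<in>bdarts T. alph T x \<notin> bdarts T) \<and>
     (darts T - bdarts T) \<inter> (darts C - bdarts C) = {}"

definition minv :: "dmap \<Rightarrow> (nat \<Rightarrow> nat) \<Rightarrow> nat \<Rightarrow> nat" where
  "minv T m z = (THE x. x \<in> bdarts T \<and> m x = z)"

definition glue :: "dmap \<Rightarrow> dmap \<Rightarrow> (nat \<Rightarrow> nat) \<Rightarrow> dmap" where
  "glue T C m =
    \<lparr>darts = (darts T - bdarts T) \<union> (darts C - bdarts C),
     alph = (\<lambda>x. if x \<in> darts T then
                   (let y = alph T x in
                     if y \<in> bdarts T then
                       (let z = alph C (m y) in if z \<in> bdarts C then alph T (minv T m z) else z)
                     else y)
                 else (let z = alph C x in if z \<in> bdarts C then alph T (minv T m z) else z)),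
     sig = (\<lambda>x. if x \<in> darts T then sig T x else sig C x),
     vk = (\<lambda>x. if x \<in> darts T then vk T x else vk C x),
     dr = (\<lambda>x. if x \<in> darts T then dr T x else dr C x),
     thick = (\<lambda>x. if x \<in> darts T then thick T x else thick C x),
     over = (\<lambda>x. if x \<in> darts T then over T x else over C x)\<rparr>"

text \<open>M' arises from M by replacing the tangle T by T' (same boundary).\<close>
definition rmove :: "dmap \<Rightarrow> dmap \<Rightarrow> dmap \<Rightarrow> dmap \<Rightarrow> bool" where
  "rmove T T' M M' \<longleftrightarrow> (\<exists>C m. glue_ok T C m \<and> glue_ok T' C m
                          \<and> iso M (glue T C m) \<and> iso M' (glue T' C m))"

subsection \<open>The Reidemeister tangles\<close>

definition inv_of :: "(nat \<times> nat) list \<Rightarrow> nat \<Rightarrow> nat" where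
  "inv_of ps d = (case map_of (ps @ map (\<lambda>(a, b). (b, a)) ps) d of Some e \<Rightarrow> e | None \<Rightarrow> d)"

definition cyc_of :: "nat list list \<Rightarrow> nat \<Rightarrow> nat" where
  "cyc_of cs d = (case map_of (concat (map (\<lambda>c. zip c (tl c @ [hd c])) cs)) d of
                    Some e \<Rightarrow> e | None \<Rightarrow> d)"

text \<open>R1: boundary darts 0,1 (boundary points p0,p1); crossing darts 2,3,4,5 in ccw order,
2 pointing to p0.  side selects on which side the loop lies, fw the orientation
(fw: from p0 to p1), ov whether the strand through 2,4 is over.\<close>
definition tR1 :: "bool \<Rightarrow> bool \<Rightarrow> bool \<Rightarrow> dmap" where
  "tR1 side fw ov =
    \<lparr>darts = {0..5},
     alph = inv_of (if side then [(0,2),(3,4),(5,1)] else [(0,2),(4,5),(3,1)]),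
     sig = cyc_of [[0,1],[2,3,4,5]],
     vk = (\<lambda>d. if d < 2 then Bdry else Cross),
     dr = (\<lambda>d. if (d \<in> (if side then {0,4,5} else {0,3,4})) = fw then Out else In),
     thick = (\<lambda>d. True),
     over = (\<lambda>d. if d \<in> {2,4} then ov else if d \<in> {3,5} then \<not> ov else False)\<rparr>"

definition tR1' :: "bool \<Rightarrow> dmap" where
  "tR1' fw =
    \<lparr>darts = {0..3},
     alph = inv_of [(0,2),(3,1)],
     sig = cyc_of [[0,1],[2,3]],
     vk = (\<lambda>d. if d < 2 then Bdry else Mark),
     dr = (\<lambda>d. if (d \<in> {0,3}) = fw then Out else In),
     thick = (\<lambda>d. True),
     over = (\<lambda>d. False)\<rparr>"

text \<open>R2: boundary points p0..p3 (ccw), strand A joins p0,p1 and strand B joins p3,p2;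
crossings X = darts 4..7, Y = darts 8..11.  dA: A runs p0 -> p1; dB: B runs p3 -> p2;
ovA: A is on top.\<close>
definition tR2 :: "bool \<Rightarrow> bool \<Rightarrow> bool \<Rightarrow> dmap" where
  "tR2 dA dB ovA =
    \<lparr>darts = {0..11},
     alph = inv_of [(0,7),(5,9),(11,1),(3,6),(4,10),(8,2)],
     sig = cyc_of [[3,2,1,0],[4,5,6,7],[8,9,10,11]],
     vk = (\<lambda>d. if d < 4 then Bdry else Cross),
     dr = (\<lambda>d. if d \<in> {0,7,5,9,11,1} then (if (d \<in> {0,5,11}) = dA then Out else In)
               else (if (d \<in> {3,4,8}) = dB then Out else In)),
     thick = (\<lambda>d. True),
     over = (\<lambda>d. if d \<in> {5,7,9,11} then ovA else if d \<in> {4,6,8,10} then \<not> ovA else False)\<rparr>"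

definition tR2' :: "bool \<Rightarrow> bool \<Rightarrow> dmap" where
  "tR2' dA dB =
    \<lparr>darts = {0..7},
     alph = inv_of [(0,4),(5,1),(2,6),(7,3)],
     sig = cyc_of [[3,2,1,0],[4,5],[6,7]],
     vk = (\<lambda>d. if d < 4 then Bdry else Mark),
     dr = (\<lambda>d. if d \<in> {0,4,5,1} then (if (d \<in> {0,5}) = dA then Out else In)
               else (if (d \<in> {3,6}) = dB then Out else In)),
     thick = (\<lambda>d. True),
     over = (\<lambda>d. False)\<rparr>"

text \<open>R3: boundary points p0..p5 (ccw), strands s=0,1,2 join p_s and p_(s+3); crossings
X01 = darts 6..9, X02 = darts 10..13, X12 = darts 14..17; the two configurations cfg
are the two sides of the move; ht gives the heights of the strands, or3 s says that
strand s runs from p_s to p_(s+3).\<close>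
definition strand3 :: "nat \<Rightarrow> nat" where
  "strand3 d = (if d \<in> {0,3,6,8,10,12} then 0 else if d \<in> {1,4,7,9,14,16} then 1 else 2)"

definition xstr3 :: "nat \<Rightarrow> nat set" where
  "xstr3 d = (if d \<in> {6..9} then {0,1} else if d \<in> {10..13} then {0,2} else {1,2})"

definition tR3 :: "bool \<Rightarrow> (nat \<Rightarrow> nat) \<Rightarrow> (nat \<Rightarrow> bool) \<Rightarrow> dmap" where
  "tR3 cfg ht or3 =
    \<lparr>darts = {0..17},
     alph = inv_of (if cfg then [(0,10),(12,6),(8,3),(1,14),(16,7),(9,4),(2,15),(17,11),(13,5)]
                    else [(0,6),(8,10),(12,3),(1,7),(9,14),(16,4),(2,11),(13,15),(17,5)]),
     sig = cyc_of [[5,4,3,2,1,0],[6,7,8,9],[10,11,12,13],[14,15,16,17]],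
     vk = (\<lambda>d. if d < 6 then Bdry else Cross),
     dr = (\<lambda>d. if (((d \<in> {0,6,10,1,7,14,2,11,15}) = (d < 6)) = or3 (strand3 d)) then Out else In),
     thick = (\<lambda>d. True),
     over = (\<lambda>d. 6 \<le> d \<and> (\<forall>s\<in>xstr3 d - {strand3 d}. ht s < ht (strand3 d)))\<rparr>"

definition heights_ok :: "(nat \<Rightarrow> nat) \<Rightarrow> bool" where
  "heights_ok ht \<longleftrightarrow> inj_on ht {0,1,2}"

text \<open>Sign of a crossing (dart d at a crossing vertex): positive iff turning the outgoing
over-strand dart counterclockwise gives the outgoing under-strand dart.\<close>
definition positive :: "dmap \<Rightarrow> nat \<Rightarrow> bool" where
  "positive M d \<longleftrightarrow> (\<exists>e\<in>orb (sig M) d. over M e \<and> dr M e = Out \<and> dr M (sig M e) = Out)"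

definition all_moves :: "(dmap \<times> dmap) set" where
  "all_moves =
     {(tR1 s fw ov, tR1' fw) | s fw ov. True}
   \<union> {(tR2 dA dB ov, tR2' dA dB) | dA dB ov. True}
   \<union> {(tR3 True ht or3, tR3 False ht or3) | ht or3. heights_ok ht}"

text \<open>The moves used in the definition of S(G): R1.1 (positive curl on side s1),
R1.2 (negative curl on side s2), R2.1-R2.4 (all oriented R2), R3.1 (one oriented R3
move given by ht, or3).\<close>
definition chosen_moves :: "bool \<Rightarrow> bool \<Rightarrow> (nat \<Rightarrow> nat) \<Rightarrow> (nat \<Rightarrow> bool) \<Rightarrow> (dmap \<times> dmap) set" where
  "chosen_moves s1 s2 ht or3 =
     {(tR1 s1 True ov, tR1' True) | ov. positive (tR1 s1 True ov) 2}
   \<union> {(tR1 s2 True ov, tR1' True) | ov. \<not> positive (tR1 s2 True ov) 2}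
   \<union> {(tR2 dA dB ov, tR2' dA dB) | dA dB ov. True}
   \<union> {(tR3 True ht or3, tR3 False ht or3)}"

definition kd_step :: "(dmap \<times> dmap) set \<Rightarrow> dmap \<Rightarrow> dmap \<Rightarrow> bool" where
  "kd_step S M M' \<longleftrightarrow> is_kd M \<and> is_kd M' \<and>
     (iso M M' \<or> subdiv M M' \<or> (\<exists>(T, T')\<in>S. rmove T T' M M'))"

text \<open>Same spherical knotoid: isotopy in S^2 and all Reidemeister moves away from the
endpoints.\<close>
definition same_sph_knotoid :: "dmap \<Rightarrow> dmap \<Rightarrow> bool" where
  "same_sph_knotoid D D' \<longleftrightarrow> equivclp (kd_step all_moves) D D'"

definition generating :: "bool \<Rightarrow> bool \<Rightarrow> (nat \<Rightarrow> nat) \<Rightarrow> (nat \<Rightarrow> bool) \<Rightarrow> bool" where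
  "generating s1 s2 ht or3 \<longleftrightarrow>
     (\<forall>M M'. same_sph_knotoid M M' \<longrightarrow> equivclp (kd_step (chosen_moves s1 s2 ht or3)) M M')"

subsection \<open>Smoothing and the label bracket\<close>

definition states :: "dmap \<Rightarrow> nat set set" where
  "states M = {F. F \<subseteq> {d \<in> darts M. vk M d = Cross} \<and>
     (\<forall>d\<in>darts M. vk M d = Cross \<longrightarrow>
        (d \<in> F \<longleftrightarrow> sig M (sig M d) \<in> F) \<and> (d \<in> F \<longleftrightarrow> sig M d \<notin> F))}"

text \<open>A-smoothing at the crossing of the first dart x of a state (x and sig x are joined):
oriented for positive, disoriented for negative crossings.\<close>
definition smA :: "dmap \<Rightarrow> nat \<Rightarrow> bool" where
  "smA M x \<longleftrightarrow> (positive M x \<longleftrightarrow> dr M x \<noteq> dr M (sig M x))"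

definition firstd :: "dmap \<Rightarrow> nat set \<Rightarrow> nat \<Rightarrow> nat" where
  "firstd M F d = (if d \<in> F then d else (sig M ^^ 3) d)"

text \<open>Smoothing in state F: old dart d becomes 2d; for x in F the darts x, sig x form a new
trivalent vertex together with the new thin dart 2x+1.\<close>
definition smooth :: "dmap \<Rightarrow> nat set \<Rightarrow> dmap" where
  "smooth M F =
    \<lparr>darts = (\<lambda>d. 2 * d) ` darts M \<union> (\<lambda>x. 2 * x + 1) ` F,
     alph = (\<lambda>n. if even n then 2 * alph M (n div 2) else 2 * sig M (sig M (n div 2)) + 1),
     sig = (\<lambda>n. if even n then
                  (let d = n div 2 in
                    if vk M d = Cross \<and> d \<notin> F then 2 * (sig M ^^ 3) d + 1 else 2 * sig M d)
                else n - 1),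
     vk = (\<lambda>n. let d = n div 2 in
                if vk M d = Cross then (if smA M (firstd M F d) then EmptyV else SolidV)
                else vk M d),
     dr = (\<lambda>n. if even n then dr M (n div 2)
               else (let x = n div 2 in if dr M x = dr M (sig M x) then dr M x else Unor)),
     thick = (\<lambda>n. if even n then thick M (n div 2) else False),
     over = (\<lambda>n. False)\<rparr>"

definition gen :: "dmap \<Rightarrow> (dmap \<Rightarrow> int)" where
  "gen G = (\<lambda>H. if H = G then 1 else 0)"

text \<open>Label bracket, an element of the free Z-module on decorated maps.\<close>
definition lbracket :: "dmap \<Rightarrow> (dmap \<Rightarrow> int)" where
  "lbracket M = (\<Sum>F\<in>states M. gen (smooth M F))"

text \<open>The submodule of relations defining S(G).\<close>
inductive_set lrel :: "bool \<Rightarrow> bool \<Rightarrow> (nat \<Rightarrow> nat) \<Rightarrow> (nat \<Rightarrow> bool) \<Rightarrow> (dmap \<Rightarrow> int) set"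
  for s1 s2 ht or3 where
  rel_iso: "is_lg G \<Longrightarrow> is_lg G' \<Longrightarrow> iso G G' \<Longrightarrow> gen G - gen G' \<in> lrel s1 s2 ht or3"
| rel_sub: "is_lg G \<Longrightarrow> is_lg G' \<Longrightarrow> subdiv G G' \<Longrightarrow> gen G - gen G' \<in> lrel s1 s2 ht or3"
| rel_loc: "(T, T') \<in> chosen_moves s1 s2 ht or3 \<Longrightarrow> glue_ok T C m \<Longrightarrow> glue_ok T' C m \<Longrightarrow>
            \<forall>d\<in>darts C. vk C d \<noteq> Cross \<Longrightarrow>
            \<forall>F\<in>states (glue T C m). is_lg (smooth (glue T C m) F) \<Longrightarrow>
            \<forall>F\<in>states (glue T' C m). is_lg (smooth (glue T' C m) F) \<Longrightarrow>
            lbracket (glue T C m) - lbracket (glue T' C m) \<in> lrel s1 s2 ht or3"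
| rel_zero: "0 \<in> lrel s1 s2 ht or3"
| rel_add: "a \<in> lrel s1 s2 ht or3 \<Longrightarrow> b \<in> lrel s1 s2 ht or3 \<Longrightarrow> a + b \<in> lrel s1 s2 ht or3"
| rel_neg: "a \<in> lrel s1 s2 ht or3 \<Longrightarrow> - a \<in> lrel s1 s2 ht or3"

definition SG_eq :: "bool \<Rightarrow> bool \<Rightarrow> (nat \<Rightarrow> nat) \<Rightarrow> (nat \<Rightarrow> bool) \<Rightarrow> (dmap \<Rightarrow> int) \<Rightarrow> (dmap \<Rightarrow> int) \<Rightarrow> bool" where
  "SG_eq s1 s2 ht or3 a b \<longleftrightarrow> a - b \<in> lrel s1 s2 ht or3"

end

theory Submission
  imports Defs
begin

text \<open>
  The label bracket is a state sum, and by the hypothesis \<open>generating\<close> spherical knotoid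
  equivalence is generated by isotopies, subdivisions and the chosen Reidemeister moves, so it
  suffices that each such step changes the bracket by relations of \<open>S(G)\<close>.
  An isotopy (an isomorphism of maps) or a subdivision acts state by state, carrying every
  smoothing to an isomorphic or subdivided smoothing, which is a defining relation.
  For a Reidemeister move replacing a tangle \<open>T\<close> by \<open>T'\<close> in a context \<open>C\<close>, the states of the
  glued diagram are the unions of a state of \<open>T\<close> and a state \<open>B\<close> of \<open>C\<close>. Smoothing the context
  first gives \<open>\<langle>T \<union> C\<rangle> = \<Sum>\<^sub>B \<langle>T \<union> C\<^sub>B\<rangle>\<close>, where the context \<open>C\<^sub>B\<close> has no crossings, and
  each difference \<open>\<langle>T \<union> C\<^sub>B\<rangle> - \<langle>T' \<union> C\<^sub>B\<rangle>\<close> is one of the local relations of \<open>S(G)\<close>.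
\<close>

section \<open>Orbits of maps that are bijective on a finite set\<close>

lemma orb_self [simp]: "d \<in> orb f d"
  unfolding orb_def by (metis funpow_0 rangeI)

lemma orb_step: "e \<in> orb f d \<Longrightarrow> f e \<in> orb f d"
  unfolding orb_def by (auto simp: image_iff) (metis funpow.simps(2) o_apply)

lemma orb_subset_closed: "d \<in> S \<Longrightarrow> (\<And>x. x \<in> S \<Longrightarrow> f x \<in> S) \<Longrightarrow> orb f d \<subseteq> S"
proof -
  assume d: "d \<in> S" and closed: "\<And>x. x \<in> S \<Longrightarrow> f x \<in> S"
  have "(f ^^ n) d \<in> S" for n by (induction n) (auto simp: d closed)
  thus ?thesis unfolding orb_def by auto
qed

lemma orb_trans: "e \<in> orb f d \<Longrightarrow> orb f e \<subseteq> orb f d"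
  by (rule orb_subset_closed) (auto intro: orb_step)

lemma orb_image:
  assumes "d \<in> S" "\<And>x. x \<in> S \<Longrightarrow> f x \<in> S" "\<And>x. x \<in> S \<Longrightarrow> g (h x) = h (f x)"
  shows "orb g (h d) = h ` orb f d"
proof -
  have "(g ^^ n) (h d) = h ((f ^^ n) d) \<and> (f ^^ n) d \<in> S" for n
  proof (induction n)
    case (Suc n) then show ?case using assms(2,3) by (metis funpow.simps(2) o_apply)
  qed (simp add: assms)
  thus ?thesis unfolding orb_def by (auto simp: image_iff)
qed

lemma orb_cong:
  assumes "d \<in> S" "\<And>x. x \<in> S \<Longrightarrow> f x \<in> S" "\<And>x. x \<in> S \<Longrightarrow> f x = g x"
  shows "orb f d = orb g d"
  using orb_image[where h = id and g = g, OF assms(1,2)] assms(2,3) by simp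

lemma funpow_in_bij_betw: "bij_betw f A A \<Longrightarrow> d \<in> A \<Longrightarrow> (f ^^ n) d \<in> A"
  by (induction n) (auto simp: bij_betw_def)

lemma orb_subset_bij_betw: "bij_betw f A A \<Longrightarrow> d \<in> A \<Longrightarrow> orb f d \<subseteq> A"
  by (rule orb_subset_closed) (auto simp: bij_betw_def)

lemma funpow_cancel_bij_betw:
  assumes b: "bij_betw f A A" and d: "d \<in> A"
  shows "i < j \<Longrightarrow> (f ^^ i) d = (f ^^ j) d \<Longrightarrow> (f ^^ (j - i)) d = d"
proof (induction i arbitrary: j)
  case (Suc i)
  obtain j' where j': "j = Suc j'" using Suc.prems by (cases j) auto
  have "f ((f ^^ i) d) = f ((f ^^ j') d)" using Suc.prems j' by simp
  hence "(f ^^ i) d = (f ^^ j') d"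
    using funpow_in_bij_betw[OF b d] b by (meson bij_betw_def inj_on_def)
  then show ?case using Suc.IH[of j'] Suc.prems j' by simp
qed simp

lemma funpow_period_bij_betw:
  assumes b: "bij_betw f A A" and fin: "finite A" and d: "d \<in> A"
  obtains n where "n > 0" "(f ^^ n) d = d"
proof -
  define g where "g x = (if x \<in> A then f x else x)" for x
  have agree: "(g ^^ n) d = (f ^^ n) d" for n
    by (induction n) (auto simp: g_def funpow_in_bij_betw[OF b d])
  have "inj g"
    using b unfolding g_def inj_def bij_betw_def inj_on_def by (metis imageI)
  moreover have "finite {y. \<exists>n. y = (g ^^ n) d}"
    by (rule finite_subset[OF _ fin]) (auto simp: agree funpow_in_bij_betw[OF b d])
  ultimately obtain n where "n > 0" "(g ^^ n) d = d" by (rule funpow_inj_finite)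
  with that show thesis by (simp add: agree)
qed

lemma orb_sym:
  assumes b: "bij_betw f A A" and fin: "finite A" and d: "d \<in> A" and e: "e \<in> orb f d"
  shows "d \<in> orb f e"
proof -
  obtain n where n: "n > 0" "(f ^^ n) d = d" using funpow_period_bij_betw[OF b fin d] .
  obtain k where k: "e = (f ^^ k) d" using e unfolding orb_def by auto
  have "(f ^^ (n * k)) d = d" using funpow_mod_eq[where n = n and x = d and m = "n * k"] n by simp
  moreover have "n * k - k + k = n * k" using n by (simp add: le_add_diff_inverse2)
  ultimately have "(f ^^ (n * k - k)) e = d" unfolding k by (metis funpow_add o_apply)
  thus ?thesis unfolding orb_def by (metis rangeI)
qed

lemma orb_eq:
  assumes "bij_betw f A A" "finite A" "d \<in> A" "e \<in> orb f d"
  shows "orb f e = orb f d"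
  using orb_trans[OF assms(4)] orb_trans[OF orb_sym[OF assms]] by blast

lemma card_orb_4:
  assumes b: "bij_betw f A A" and d: "d \<in> A" and c: "card (orb f d) = 4"
  shows "f (f (f (f d))) = d" "f d \<noteq> d" "f (f d) \<noteq> d" "f (f (f d)) \<noteq> d"
proof -
  let ?p = "\<lambda>i. (f ^^ i) d"
  have short: "?p k \<noteq> d" if k: "0 < k" "k < 4" for k
  proof
    assume "?p k = d"
    hence "orb f d \<subseteq> ?p ` {..<k}"
      unfolding orb_def using \<open>?p k = d\<close> k(1)
      by (auto intro!: image_eqI[where x = "m mod k" for m] simp: funpow_mod_eq[where n = k])
    hence "card (orb f d) \<le> card (?p ` {..<k})" by (intro card_mono) auto
    also have "\<dots> \<le> k" using card_image_le[of "{..<k}" ?p] by simp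
    finally have "card (orb f d) \<le> k" .
    thus False using c k(2) by simp
  qed
  have distinct: "?p i \<noteq> ?p j" if "i < j" "j < 4" for i j
    using short[of "j - i"] funpow_cancel_bij_betw[OF b d that(1)] that by auto
  have "inj_on ?p {..<4}" by (rule inj_onI) (metis distinct lessThan_iff nat_neq_iff)
  hence "card (?p ` {..<4}) = 4" by (simp add: card_image)
  moreover have "?p ` {..<4} \<subseteq> orb f d" unfolding orb_def by auto
  moreover have "finite (orb f d)" using c by (metis card.infinite zero_neq_numeral)
  ultimately have orb4: "orb f d = ?p ` {..<4}" using c by (metis card_subset_eq)
  obtain i where i: "i < 4" "?p 4 = ?p i" using orb4 unfolding orb_def by blast
  have "i = 0"
    using funpow_cancel_bij_betw[OF b d, of i 4] short[of "4 - i"] i by (cases "i = 0") auto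
  thus "f (f (f (f d))) = d" using i by (simp add: numeral_eq_Suc)
  show "f d \<noteq> d" "f (f d) \<noteq> d" "f (f (f d)) \<noteq> d"
    using short[of 1] short[of 2] short[of 3] by (simp_all add: numeral_eq_Suc)
qed

lemma card_image_eq_kernel:
  assumes "\<And>x y. x \<in> A \<Longrightarrow> y \<in> A \<Longrightarrow> (f x = f y) \<longleftrightarrow> (g x = g y)"
  shows "card (f ` A) = card (g ` A)"
proof -
  define h where "h = (\<lambda>Y. f (SOME x. x \<in> A \<and> g x = Y))"
  have hg: "h (g x) = f x" if "x \<in> A" for x
  proof -
    have "\<exists>y. y \<in> A \<and> g y = g x" using that by blast
    hence "(SOME y. y \<in> A \<and> g y = g x) \<in> A \<and> g (SOME y. y \<in> A \<and> g y = g x) = g x"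
      by (rule someI_ex)
    thus ?thesis unfolding h_def using assms that by blast
  qed
  have "h ` (g ` A) = f ` A" using hg by (auto simp: image_iff)
  moreover have "inj_on h (g ` A)" unfolding inj_on_def using hg assms by auto
  ultimately show ?thesis by (metis card_image)
qed

lemma involution_bij_betw:
  "finite A \<Longrightarrow> (\<And>x. x \<in> A \<Longrightarrow> f x \<in> A \<and> f (f x) = x) \<Longrightarrow> bij_betw f A A"
proof -
  assume fin: "finite A" and inv: "\<And>x. x \<in> A \<Longrightarrow> f x \<in> A \<and> f (f x) = x"
  have "inj_on f A" unfolding inj_on_def using inv by metis
  moreover have "f ` A \<subseteq> A" using inv by auto
  ultimately show ?thesis using endo_inj_surj[OF fin] by (simp add: bij_betw_def)
qed

section \<open>Well-formed maps\<close>

lemma opp_opp [simp]: "opp (opp x) = x"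
  by (cases x) auto

lemma opp_eq_iff [simp]: "opp x = opp y \<longleftrightarrow> x = y"
  by (cases x; cases y) auto

lemma adj_sig: "x \<in> darts N \<Longrightarrow> (x, sig N x) \<in> adj N"
  by (auto simp: adj_def)

lemma adj_alph: "x \<in> darts N \<Longrightarrow> (x, alph N x) \<in> adj N"
  by (auto simp: adj_def)

locale wf_dmap =
  fixes M :: dmap
  assumes wf: "wf_map M"
begin

lemma finite_darts: "finite (darts M)"
  using wf by (simp add: wf_map_def)

lemma alph_in: "d \<in> darts M \<Longrightarrow> alph M d \<in> darts M"
  using wf by (simp add: wf_map_def)

lemma alph_alph [simp]: "d \<in> darts M \<Longrightarrow> alph M (alph M d) = d"
  using wf by (simp add: wf_map_def)

lemma alph_neq: "d \<in> darts M \<Longrightarrow> alph M d \<noteq> d"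
  using wf by (simp add: wf_map_def)

lemma sig_bij: "bij_betw (sig M) (darts M) (darts M)"
  using wf by (simp add: wf_map_def)

lemma sig_in: "d \<in> darts M \<Longrightarrow> sig M d \<in> darts M"
  using sig_bij by (meson bij_betwE)

lemma sig_inj: "d \<in> darts M \<Longrightarrow> e \<in> darts M \<Longrightarrow> sig M d = sig M e \<Longrightarrow> d = e"
  using sig_bij by (meson bij_betw_imp_inj_on inj_onD)

lemma vk_sig [simp]: "d \<in> darts M \<Longrightarrow> vk M (sig M d) = vk M d"
  using wf by (simp add: wf_map_def)

lemma thick_alph [simp]: "d \<in> darts M \<Longrightarrow> thick M (alph M d) = thick M d"
  using wf by (simp add: wf_map_def)

lemma dr_alph [simp]: "d \<in> darts M \<Longrightarrow> dr M (alph M d) = opp (dr M d)"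
  using wf by (simp add: wf_map_def)

lemma connected: "d \<in> darts M \<Longrightarrow> e \<in> darts M \<Longrightarrow> (d, e) \<in> (adj M)\<^sup>*"
  using wf by (simp add: wf_map_def connected_map_def)

lemma spherical: "spherical_map M"
  using wf by (simp add: wf_map_def)

lemma alph_bij: "bij_betw (alph M) (darts M) (darts M)"
  using involution_bij_betw[OF finite_darts] alph_in alph_alph by blast

lemma face_bij: "bij_betw (sig M \<circ> alph M) (darts M) (darts M)"
  using bij_betw_trans[OF alph_bij sig_bij] .

lemma orb_sig_subset: "d \<in> darts M \<Longrightarrow> orb (sig M) d \<subseteq> darts M"
  by (rule orb_subset_bij_betw[OF sig_bij])

lemma orb_sig_eq: "d \<in> darts M \<Longrightarrow> e \<in> orb (sig M) d \<Longrightarrow> orb (sig M) e = orb (sig M) d"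
  by (rule orb_eq[OF sig_bij finite_darts])

end

lemma is_kd_wf_map: "is_kd M \<Longrightarrow> wf_map M"
  by (simp add: is_kd_def)

definition proper_crossings :: "dmap \<Rightarrow> bool" where
  "proper_crossings M \<longleftrightarrow> (\<forall>d\<in>darts M. vk M d = Cross \<longrightarrow>
     sig M (sig M (sig M (sig M d))) = d \<and> sig M d \<noteq> d \<and> sig M (sig M d) \<noteq> d
     \<and> sig M (sig M (sig M d)) \<noteq> d
     \<and> dr M (sig M (sig M d)) = opp (dr M d) \<and> dr M d \<noteq> Unor)"

lemma is_kd_proper_crossings: "is_kd M \<Longrightarrow> proper_crossings M"
  unfolding proper_crossings_def
proof (intro ballI impI)
  fix d assume k: "is_kd M" and d: "d \<in> darts M" and c: "vk M d = Cross"
  interpret wf_dmap M using is_kd_wf_map[OF k] by unfold_locales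
  have "deg M d = 4" "dr M (sig M (sig M d)) = opp (dr M d)" "dr M d \<noteq> Unor"
    using k d c by (simp_all add: is_kd_def)
  thus "sig M (sig M (sig M (sig M d))) = d \<and> sig M d \<noteq> d \<and> sig M (sig M d) \<noteq> d
     \<and> sig M (sig M (sig M d)) \<noteq> d \<and> dr M (sig M (sig M d)) = opp (dr M d) \<and> dr M d \<noteq> Unor"
    using card_orb_4[OF sig_bij d] by (simp add: deg_def)
qed

locale proper_dmap = wf_dmap +
  assumes proper: "proper_crossings M"
begin

lemma sig4_cross [simp]: "d \<in> darts M \<Longrightarrow> vk M d = Cross \<Longrightarrow> sig M (sig M (sig M (sig M d))) = d"
  using proper by (simp add: proper_crossings_def)

lemma sig_neq_cross: "d \<in> darts M \<Longrightarrow> vk M d = Cross \<Longrightarrow> sig M d \<noteq> d"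
  using proper by (simp add: proper_crossings_def)

lemma sig2_neq_cross: "d \<in> darts M \<Longrightarrow> vk M d = Cross \<Longrightarrow> sig M (sig M d) \<noteq> d"
  using proper by (simp add: proper_crossings_def)

lemma dr_sig2_cross [simp]:
  "d \<in> darts M \<Longrightarrow> vk M d = Cross \<Longrightarrow> dr M (sig M (sig M d)) = opp (dr M d)"
  using proper by (simp add: proper_crossings_def)

lemma orb_sig_cross:
  "d \<in> darts M \<Longrightarrow> vk M d = Cross \<Longrightarrow> orb (sig M) d = {d, sig M d, sig M (sig M d), sig M (sig M (sig M d))}"
  by (intro equalityI orb_subset_closed) (auto intro!: orb_step)

end

definition trivalent_ok :: "dmap \<Rightarrow> nat \<Rightarrow> bool" where
  "trivalent_ok G d \<longleftrightarrow> deg G d = 3 \<and> card {e \<in> orb (sig G) d. \<not> thick G e} = 1 \<and>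
     (\<forall>e\<in>orb (sig G) d. \<not> thick G e \<longrightarrow>
        (let a = sig G e; b = sig G (sig G e) in
          (dr G a = opp (dr G b) \<and> dr G e = Unor) \<or> (dr G a = dr G b \<and> dr G e = dr G a)))"

lemma is_lg_altdef: "is_lg G \<longleftrightarrow> wf_map G \<and>
     (\<forall>d\<in>darts G. vk G d \<in> {Tail, Head, EmptyV, SolidV, Mark} \<and> \<not> over G d) \<and>
     (\<forall>d\<in>darts G. thick G d \<longrightarrow> dr G d \<noteq> Unor) \<and>
     (\<exists>!d. d \<in> darts G \<and> vk G d = Tail) \<and> (\<exists>!d. d \<in> darts G \<and> vk G d = Head) \<and>
     (\<forall>d\<in>darts G. vk G d = Tail \<longrightarrow> deg G d = 1 \<and> thick G d \<and> dr G d = Out) \<and>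
     (\<forall>d\<in>darts G. vk G d = Head \<longrightarrow> deg G d = 1 \<and> thick G d \<and> dr G d = In) \<and>
     (\<forall>d\<in>darts G. vk G d \<in> {EmptyV, SolidV} \<longrightarrow> trivalent_ok G d) \<and>
     (\<forall>d\<in>darts G. vk G d = Mark \<longrightarrow> deg G d = 2 \<and> thick G (sig G d) = thick G d
                                   \<and> dr G (sig G d) = opp (dr G d))"
  unfolding is_lg_def trivalent_ok_def ..

section \<open>Smoothing a knotoid diagram\<close>

lemma Suc_double_neq_double [simp]: "Suc (2 * i) \<noteq> 2 * j" "2 * j \<noteq> Suc (2 * i)"
  by presburger+

lemma funpow_3: "(f ^^ 3) x = f (f (f x))"
  by (simp add: numeral_3_eq_3)

lemma smooth_darts: "darts (smooth M F) = (\<lambda>d. 2 * d) ` darts M \<union> (\<lambda>x. 2 * x + 1) ` F"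
  by (simp add: smooth_def)

lemma smooth_alph_even [simp]: "alph (smooth M F) (2 * d) = 2 * alph M d"
  by (simp add: smooth_def)

lemma smooth_alph_odd [simp]: "alph (smooth M F) (Suc (2 * x)) = Suc (2 * sig M (sig M x))"
  by (simp add: smooth_def)

lemma smooth_sig_even [simp]: "sig (smooth M F) (2 * d) =
   (if vk M d = Cross \<and> d \<notin> F then Suc (2 * sig M (sig M (sig M d))) else 2 * sig M d)"
  by (simp add: smooth_def funpow_3)

lemma smooth_sig_odd [simp]: "sig (smooth M F) (Suc (2 * x)) = 2 * x"
  by (simp add: smooth_def)

lemma smooth_vk_even [simp]: "vk (smooth M F) (2 * d) =
   (if vk M d = Cross then (if smA M (firstd M F d) then EmptyV else SolidV) else vk M d)"
  by (simp add: smooth_def)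

lemma smooth_vk_odd [simp]: "vk (smooth M F) (Suc (2 * d)) =
   (if vk M d = Cross then (if smA M (firstd M F d) then EmptyV else SolidV) else vk M d)"
  by (simp add: smooth_def)

lemma smooth_dr_even [simp]: "dr (smooth M F) (2 * d) = dr M d"
  by (simp add: smooth_def)

lemma smooth_dr_odd [simp]: "dr (smooth M F) (Suc (2 * x)) =
   (if dr M x = dr M (sig M x) then dr M x else Unor)"
  by (simp add: smooth_def)

lemma smooth_thick_even [simp]: "thick (smooth M F) (2 * d) = thick M d"
  by (simp add: smooth_def)

lemma smooth_thick_odd [simp]: "thick (smooth M F) (Suc (2 * d)) = False"
  by (simp add: smooth_def)

lemma smooth_over [simp]: "over (smooth M F) n = False"
  by (simp add: smooth_def)

lemma smooth_in_even [simp]: "2 * d \<in> darts (smooth M F) \<longleftrightarrow> d \<in> darts M"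
  by (auto simp: smooth_darts)

lemma smooth_in_odd [simp]: "Suc (2 * x) \<in> darts (smooth M F) \<longleftrightarrow> x \<in> F"
  by (auto simp: smooth_darts)

lemma smooth_darts_cases:
  "n \<in> darts (smooth M F) \<Longrightarrow> (\<And>d. d \<in> darts M \<Longrightarrow> n = 2 * d \<Longrightarrow> P) \<Longrightarrow>
   (\<And>x. x \<in> F \<Longrightarrow> n = Suc (2 * x) \<Longrightarrow> P) \<Longrightarrow> P"
  by (auto simp: smooth_darts)

lemma smooth_vk_not_Cross: "vk (smooth M F) n \<noteq> Cross"
  by (simp add: smooth_def Let_def)

lemma firstd_eq: "firstd M F d = (if d \<in> F then d else sig M (sig M (sig M d)))"
  by (simp add: firstd_def funpow_3)

lemma smA_cong:
  assumes e: "e \<in> S" and closed: "\<And>d. d \<in> S \<Longrightarrow> sig M1 d \<in> S"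
    and agree: "\<And>d. d \<in> S \<Longrightarrow> sig M2 d = sig M1 d \<and> dr M2 d = dr M1 d \<and> over M2 d = over M1 d"
  shows "smA M2 e = smA M1 e"
proof -
  have "orb (sig M2) e = orb (sig M1) e"
    by (rule orb_cong[where S = S]) (use e closed agree in auto)
  moreover have "orb (sig M1) e \<subseteq> S" by (rule orb_subset_closed) (use e closed in auto)
  ultimately have "positive M2 e = positive M1 e"
    unfolding positive_def using agree closed by (auto simp: subset_iff)
  thus ?thesis unfolding smA_def using e agree closed by simp
qed

definition crossings :: "dmap \<Rightarrow> nat set" where
  "crossings M = {d \<in> darts M. vk M d = Cross}"

definition state_on :: "nat set \<Rightarrow> (nat \<Rightarrow> nat) \<Rightarrow> nat set \<Rightarrow> bool" where
  "state_on X f F \<longleftrightarrow> F \<subseteq> X \<and> (\<forall>d\<in>X. (d \<in> F \<longleftrightarrow> f (f d) \<in> F) \<and> (d \<in> F \<longleftrightarrow> f d \<notin> F))"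

lemma states_eq_state_on: "states M = {F. state_on (crossings M) (sig M) F}"
  unfolding states_def state_on_def crossings_def by (intro Collect_cong) auto

lemma finite_states: "wf_map M \<Longrightarrow> finite (states M)"
  by (rule finite_subset[of _ "Pow (darts M)"]) (auto simp: states_def wf_map_def)

lemma state_on_cong:
  assumes "\<And>d. d \<in> X \<Longrightarrow> f d = g d" "\<And>d. d \<in> X \<Longrightarrow> f d \<in> X"
  shows "state_on X f F = state_on X g F"
  unfolding state_on_def using assms by (intro conj_cong refl ball_cong) auto

lemma state_on_Un:
  assumes XY: "X \<inter> Y = {}" and "\<And>d. d \<in> X \<Longrightarrow> f d \<in> X" "\<And>d. d \<in> Y \<Longrightarrow> f d \<in> Y"
  shows "state_on (X \<union> Y) f F \<longleftrightarrow> F \<subseteq> X \<union> Y \<and> state_on X f (F \<inter> X) \<and> state_on Y f (F \<inter> Y)"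
  unfolding state_on_def using assms by auto

lemma states_cong:
  assumes "crossings N = crossings M"
    and "\<And>d. d \<in> crossings M \<Longrightarrow> sig N d = sig M d" "\<And>d. d \<in> crossings M \<Longrightarrow> sig M d \<in> crossings M"
  shows "states N = states M"
proof -
  have "state_on (crossings M) (sig N) = state_on (crossings M) (sig M)"
    by (rule ext, rule state_on_cong) (use assms(2,3) in auto)
  thus ?thesis unfolding states_eq_state_on assms(1) by simp
qed

lemma (in wf_dmap) sig_crossings: "d \<in> crossings M \<Longrightarrow> sig M d \<in> crossings M"
  by (simp add: crossings_def sig_in)

locale smoothing = proper_dmap +
  fixes F :: "nat set"
  assumes state: "F \<in> states M"
begin

abbreviation "s \<equiv> sig M"
abbreviation "a \<equiv> alph M"
abbreviation "D \<equiv> darts M"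
abbreviation "M' \<equiv> smooth M F"

lemma state_cross: "x \<in> F \<Longrightarrow> x \<in> D \<and> vk M x = Cross"
  using state by (auto simp: states_def)

lemma state_sig2: "d \<in> D \<Longrightarrow> vk M d = Cross \<Longrightarrow> (s (s d) \<in> F) = (d \<in> F)"
  using state by (auto simp: states_def)

lemma state_sig: "d \<in> D \<Longrightarrow> vk M d = Cross \<Longrightarrow> (s d \<in> F) = (d \<notin> F)"
  using state by (auto simp: states_def)

lemma finite_smooth_darts: "finite (darts M')"
  using finite_darts state_cross by (auto simp: smooth_darts intro: finite_subset[of F D])

lemma smooth_alph_ok: "n \<in> darts M' \<Longrightarrow> alph M' n \<in> darts M' \<and> alph M' (alph M' n) = n \<and> alph M' n \<noteq> n"
proof (erule smooth_darts_cases)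
  fix d assume "d \<in> D" "n = 2 * d" thus ?thesis using alph_in alph_neq by simp
next
  fix x assume x: "x \<in> F" "n = Suc (2 * x)"
  have "x \<in> D" "vk M x = Cross" using state_cross x by auto
  thus ?thesis using x state_sig2 sig2_neq_cross by simp
qed

lemma smooth_sig_in: "n \<in> darts M' \<Longrightarrow> sig M' n \<in> darts M'"
proof (erule smooth_darts_cases)
  fix d assume d: "d \<in> D" "n = 2 * d"
  show ?thesis
  proof (cases "vk M d = Cross \<and> d \<notin> F")
    case True
    hence "s d \<in> F" using state_sig d by auto
    hence "s (s (s d)) \<in> F" using state_sig2 d sig_in True by auto
    then show ?thesis using True d by simp
  next
    case False
    hence "sig M' n = 2 * s d" using d by (simp only: smooth_sig_even if_False)
    then show ?thesis using d sig_in by simp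
  qed
next
  fix x assume "x \<in> F" "n = Suc (2 * x)" thus ?thesis using state_cross by simp
qed

lemma sig3_inj: "d \<in> D \<Longrightarrow> e \<in> D \<Longrightarrow> s (s (s d)) = s (s (s e)) \<Longrightarrow> d = e"
  using sig_inj sig_in by metis

lemma smooth_sig_even_neq_odd: "d \<in> D \<Longrightarrow> x \<in> F \<Longrightarrow> sig M' (2 * d) \<noteq> sig M' (Suc (2 * x))"
proof
  assume d: "d \<in> D" and x: "x \<in> F" and eq: "sig M' (2 * d) = sig M' (Suc (2 * x))"
  have xc: "x \<in> D" "vk M x = Cross" using state_cross x by auto
  have nc: "\<not> (vk M d = Cross \<and> d \<notin> F)" and sd: "s d = x" using eq by (auto split: if_splits)
  show False
  proof (cases "vk M d = Cross")
    case True
    thus False using nc state_sig[OF d True] sd x by simp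
  next
    case False
    thus False using vk_sig[OF d] sd xc by simp
  qed
qed

lemma smooth_sig_inj: "n \<in> darts M' \<Longrightarrow> n' \<in> darts M' \<Longrightarrow> sig M' n = sig M' n' \<Longrightarrow> n = n'"
proof (erule smooth_darts_cases; erule smooth_darts_cases)
  fix d e assume "d \<in> D" "n = 2 * d" "e \<in> D" "n' = 2 * e" "sig M' n = sig M' n'"
  thus "n = n'" using sig_inj sig3_inj by (auto split: if_splits)
qed (use smooth_sig_even_neq_odd in \<open>metis, metis, simp\<close>)

lemma smooth_sig_bij: "bij_betw (sig M') (darts M') (darts M')"
proof -
  have "inj_on (sig M') (darts M')" using smooth_sig_inj by (auto simp: inj_on_def)
  moreover have "sig M' ` darts M' \<subseteq> darts M'" using smooth_sig_in by auto
  ultimately show ?thesis using endo_inj_surj[OF finite_smooth_darts] by (simp add: bij_betw_def)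
qed

lemma smooth_vk_sig: "n \<in> darts M' \<Longrightarrow> vk M' (sig M' n) = vk M' n"
proof (erule smooth_darts_cases)
  fix d assume d: "d \<in> D" "n = 2 * d"
  show ?thesis
  proof (cases "vk M d = Cross")
    case c: True
    show ?thesis
    proof (cases "d \<in> F")
      case True
      have "s d \<notin> F" using state_sig d c True by auto
      hence "firstd M F (s d) = d" using d c by (simp add: firstd_eq)
      moreover have "firstd M F d = d" using True by (simp add: firstd_eq)
      ultimately show ?thesis using d c True sig_in by simp
    next
      case False
      have "s (s (s d)) \<in> F" using state_sig state_sig2 d c False sig_in vk_sig by metis
      hence "firstd M F (s (s (s d))) = s (s (s d))" by (simp add: firstd_eq)
      moreover have "firstd M F d = s (s (s d))" using False by (simp add: firstd_eq)
      ultimately show ?thesis using d c False sig_in by simp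
    qed
  next
    case False
    then show ?thesis using d sig_in by simp
  qed
next
  fix x assume "x \<in> F" "n = Suc (2 * x)" thus ?thesis by simp
qed

lemma smooth_thick_alph: "n \<in> darts M' \<Longrightarrow> thick M' (alph M' n) = thick M' n"
  by (erule smooth_darts_cases) auto

lemma smooth_dr_alph: "n \<in> darts M' \<Longrightarrow> dr M' (alph M' n) = opp (dr M' n)"
proof (erule smooth_darts_cases)
  fix d assume "d \<in> D" "n = 2 * d" thus ?thesis by simp
next
  fix x assume x: "x \<in> F" "n = Suc (2 * x)"
  have xc: "x \<in> D" "vk M x = Cross" using state_cross x by auto
  have "dr M (s (s (s x))) = opp (dr M (s x))" using dr_sig2_cross[of "s x"] xc sig_in by simp
  thus ?thesis using x xc by auto
qed

lemma smooth_adj_lift_step: "e \<in> D \<Longrightarrow> (e, f) \<in> adj M \<Longrightarrow> (2 * e, 2 * f) \<in> (adj M')\<^sup>*"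
proof -
  assume e: "e \<in> D" and ef: "(e, f) \<in> adj M"
  hence "f = s e \<or> f = a e" by (auto simp: adj_def)
  thus ?thesis
  proof
    assume f: "f = a e"
    have "(2 * e, alph M' (2 * e)) \<in> adj M'" using e by (intro adj_alph) simp
    thus ?thesis using f by simp
  next
    assume f: "f = s e"
    show ?thesis
    proof (cases "vk M e = Cross \<and> e \<notin> F")
      case True
      have sF: "s (s (s e)) \<in> F" using state_sig state_sig2 e True sig_in vk_sig by metis
      have 1: "(2 * e, Suc (2 * s (s (s e)))) \<in> adj M'"
        using adj_sig[of "2 * e" M'] e True by simp
      have 2: "(Suc (2 * s (s (s e))), Suc (2 * s e)) \<in> adj M'"
        using adj_alph[of "Suc (2 * s (s (s e)))" M'] sF True e by simp
      have 3: "(Suc (2 * s e), 2 * s e) \<in> adj M'"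
        using adj_sig[of "Suc (2 * s e)" M'] state_sig e True by simp
      show ?thesis using 1 2 3 f by (meson converse_rtrancl_into_rtrancl r_into_rtrancl)
    next
      case False
      have "(2 * e, sig M' (2 * e)) \<in> adj M'" using e by (intro adj_sig) simp
      moreover have "sig M' (2 * e) = 2 * s e" using False by (simp only: smooth_sig_even if_False)
      ultimately show ?thesis using f by simp
    qed
  qed
qed

lemma adj_in_darts: "(e, f) \<in> adj M \<Longrightarrow> f \<in> D"
  by (auto simp: adj_def sig_in alph_in)

lemma smooth_adj_lift: "(d, e) \<in> (adj M)\<^sup>* \<Longrightarrow> d \<in> D \<Longrightarrow> (2 * d, 2 * e) \<in> (adj M')\<^sup>* \<and> e \<in> D"
proof (induction rule: rtrancl_induct)
  case base then show ?case by simp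
next
  case (step e f)
  then show ?case using smooth_adj_lift_step adj_in_darts by (meson rtrancl_trans)
qed

lemma smooth_connected: "connected_map M'"
  unfolding connected_map_def
proof (intro ballI)
  fix n n' assume n: "n \<in> darts M'" and n': "n' \<in> darts M'"
  obtain d where d: "d \<in> D" "(n, 2 * d) \<in> (adj M')\<^sup>*"
  proof (rule smooth_darts_cases[OF n])
    fix d assume "d \<in> D" "n = 2 * d" thus ?thesis using that by blast
  next
    fix x assume x: "x \<in> F" "n = Suc (2 * x)"
    have "(n, 2 * x) \<in> adj M'" using adj_sig[OF n] x by simp
    thus ?thesis using that state_cross x by blast
  qed
  obtain e where e: "e \<in> D" "(2 * e, n') \<in> (adj M')\<^sup>*"
  proof (rule smooth_darts_cases[OF n'])
    fix d assume "d \<in> D" "n' = 2 * d" thus ?thesis using that by blast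
  next
    fix x assume x: "x \<in> F" "n' = Suc (2 * x)"
    have xc: "x \<in> D" "vk M x = Cross" using state_cross x by auto
    have "s x \<notin> F" using state_sig xc x by simp
    hence "sig M' (2 * s x) = n'" using x xc sig_in by simp
    hence "(2 * s x, n') \<in> adj M'" using adj_sig[of "2 * s x" M'] xc sig_in by simp
    thus ?thesis using that xc sig_in by blast
  qed
  have "(2 * d, 2 * e) \<in> (adj M')\<^sup>*" using smooth_adj_lift[OF connected[OF d(1) e(1)] d(1)] by simp
  thus "(n, n') \<in> (adj M')\<^sup>*" using d e by (meson rtrancl_trans)
qed

abbreviation "face \<equiv> s \<circ> a"
abbreviation "face' \<equiv> sig M' \<circ> alph M'"

lemma smooth_alph_bij: "bij_betw (alph M') (darts M') (darts M')"
  using involution_bij_betw[OF finite_smooth_darts] smooth_alph_ok by blast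

lemma smooth_face_bij: "bij_betw face' (darts M') (darts M')"
  using bij_betw_trans[OF smooth_alph_bij smooth_sig_bij] .

text \<open>A face of the smoothing follows the corresponding face of \<open>M\<close>, except that it may take a
  detour through the new thin edge at a crossing.\<close>
lemma smooth_face_step: "e \<in> D \<Longrightarrow> face' (2 * e) = 2 * face e \<or>
   (vk M (a e) = Cross \<and> face' (2 * e) = Suc (2 * s (s (s (a e)))) \<and> face' (face' (2 * e)) = 2 * face e)"
proof -
  assume e: "e \<in> D"
  have ae: "a e \<in> D" using alph_in e .
  show ?thesis
  proof (cases "vk M (a e) = Cross \<and> a e \<notin> F")
    case True
    have "face' (face' (2 * e)) = 2 * face e" using True ae by simp
    then show ?thesis using True by simp
  next
    case False
    have "face' (2 * e) = sig M' (2 * a e)" by simp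
    also have "\<dots> = 2 * s (a e)" using False by (simp only: smooth_sig_even if_False)
    finally show ?thesis by simp
  qed
qed

lemma smooth_face_reach: "d \<in> D \<Longrightarrow> 2 * (face ^^ n) d \<in> orb face' (2 * d)"
proof (induction n)
  case 0 then show ?case by simp
next
  case (Suc n)
  have e: "(face ^^ n) d \<in> D" using funpow_in_bij_betw[OF face_bij Suc.prems] .
  from smooth_face_step[OF e] have "2 * face ((face ^^ n) d) \<in> orb face' (2 * d)"
    using Suc orb_step by metis
  moreover have eq: "(face ^^ Suc n) d = face ((face ^^ n) d)" by simp
  ultimately show ?case by (simp only: eq)
qed

lemma smooth_face_reach_orb: "d \<in> D \<Longrightarrow> e \<in> orb face d \<Longrightarrow> 2 * e \<in> orb face' (2 * d)"
  using smooth_face_reach unfolding orb_def by auto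

lemma smooth_face_orb_subset: assumes d: "d \<in> D"
  shows "orb face' (2 * d) \<subseteq> (\<lambda>e. 2 * e) ` orb face d \<union>
     {Suc (2 * s (s (s (a e)))) | e. e \<in> orb face d \<and> vk M (a e) = Cross}" (is "_ \<subseteq> ?S")
proof (rule orb_subset_closed)
  show "2 * d \<in> ?S" by simp
next
  fix x assume x: "x \<in> ?S"
  have oD: "orb face d \<subseteq> D" using orb_subset_bij_betw[OF face_bij d] .
  show "face' x \<in> ?S"
  proof (cases "x \<in> (\<lambda>e. 2 * e) ` orb face d")
    case True
    then obtain e where e: "e \<in> orb face d" "x = 2 * e" by auto
    have eD: "e \<in> D" using e oD by auto
    have pe: "face e \<in> orb face d" using orb_step[OF e(1)] .
    from smooth_face_step[OF eD] show ?thesis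
    proof
      assume "face' (2 * e) = 2 * face e"
      hence "face' x = 2 * face e" using e by simp
      thus ?thesis using pe by (intro UnI1) (rule image_eqI)
    next
      assume h: "vk M (a e) = Cross \<and> face' (2 * e) = Suc (2 * s (s (s (a e)))) \<and> face' (face' (2 * e)) = 2 * face e"
      hence "face' x = Suc (2 * s (s (s (a e))))" using e(2) by (simp only:)
      thus ?thesis using h e(1) by (intro UnI2) blast
    qed
  next
    case False
    then obtain e where e: "e \<in> orb face d" "vk M (a e) = Cross" "x = Suc (2 * s (s (s (a e))))"
      using x by auto
    have eD: "e \<in> D" using e oD by auto
    have ae: "a e \<in> D" using alph_in eD .
    have "face' x = 2 * face e" using e ae by simp
    moreover have "face e \<in> orb face d" using orb_step[OF e(1)] .
    ultimately show ?thesis by (intro UnI1) (rule image_eqI)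
  qed
qed

lemma smooth_face_orb_back: "d \<in> D \<Longrightarrow> 2 * e \<in> orb face' (2 * d) \<Longrightarrow> e \<in> orb face d"
proof -
  assume d: "d \<in> D" and h: "2 * e \<in> orb face' (2 * d)"
  have "2 * e \<in> (\<lambda>e. 2 * e) ` orb face d \<union>
     {Suc (2 * s (s (s (a e)))) | e. e \<in> orb face d \<and> vk M (a e) = Cross}"
    using smooth_face_orb_subset[OF d] h by blast
  thus "e \<in> orb face d" by auto
qed

lemma smooth_faces: "orb face' ` darts M' = (\<lambda>d. orb face' (2 * d)) ` D"
proof
  show "(\<lambda>d. orb face' (2 * d)) ` D \<subseteq> orb face' ` darts M'" by auto
next
  show "orb face' ` darts M' \<subseteq> (\<lambda>d. orb face' (2 * d)) ` D"
  proof
    fix Q assume "Q \<in> orb face' ` darts M'"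
    then obtain n where n: "n \<in> darts M'" "Q = orb face' n" by auto
    show "Q \<in> (\<lambda>d. orb face' (2 * d)) ` D"
    proof (rule smooth_darts_cases[OF n(1)])
      fix d assume "d \<in> D" "n = 2 * d" thus ?thesis using n by auto
    next
      fix x assume x: "x \<in> F" "n = Suc (2 * x)"
      have xc: "x \<in> D" "vk M x = Cross" using state_cross x by auto
      have "face' n = 2 * s (s x)" using x xc sig_in state_sig2 by simp
      hence "2 * s (s x) \<in> orb face' n" using orb_step[OF orb_self[of n face']] by simp
      hence "orb face' (2 * s (s x)) = orb face' n" by (rule orb_eq[OF smooth_face_bij finite_smooth_darts n(1)])
      hence "orb face' (2 * s (s x)) = Q" using n(2) by simp
      moreover have "s (s x) \<in> D" using sig_in xc by simp
      ultimately show ?thesis by auto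
    qed
  qed
qed

lemma card_smooth_faces: "card (orb face' ` darts M') = card (orb face ` D)"
  unfolding smooth_faces
proof (rule card_image_eq_kernel)
  fix d e assume d: "d \<in> D" and e: "e \<in> D"
  show "(orb face' (2 * d) = orb face' (2 * e)) = (orb face d = orb face e)"
  proof
    assume h: "orb face' (2 * d) = orb face' (2 * e)"
    have "2 * e \<in> orb face' (2 * d)" using h by simp
    hence "e \<in> orb face d" using smooth_face_orb_back d by blast
    hence "orb face e = orb face d" by (rule orb_eq[OF face_bij finite_darts d])
    thus "orb face d = orb face e" by simp
  next
    assume h: "orb face d = orb face e"
    have "e \<in> orb face d" using h by simp
    hence "2 * e \<in> orb face' (2 * d)" using smooth_face_reach_orb d by blast
    moreover have "2 * d \<in> darts M'" using d by simp
    ultimately have "orb face' (2 * e) = orb face' (2 * d)" using orb_eq[OF smooth_face_bij finite_smooth_darts] by blast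
    thus "orb face' (2 * d) = orb face' (2 * e)" by simp
  qed
qed

abbreviation "NC \<equiv> {d \<in> D. vk M d \<noteq> Cross}"
abbreviation "CC \<equiv> {d \<in> D. vk M d = Cross}"

lemma smooth_orb_noncross: "d \<in> NC \<Longrightarrow> orb (sig M') (2 * d) = (\<lambda>e. 2 * e) ` orb s d"
  by (rule orb_image[where S = NC]) (auto simp: sig_in)

lemma smooth_orb_odd: "x \<in> F \<Longrightarrow> orb (sig M') (Suc (2 * x)) = {Suc (2 * x), 2 * x, 2 * s x}"
proof (intro equalityI orb_subset_closed)
  fix y assume x: "x \<in> F" and y: "y \<in> {Suc (2 * x), 2 * x, 2 * s x}"
  have xc: "x \<in> D" "vk M x = Cross" using state_cross x by auto
  have "s x \<notin> F" using state_sig xc x by simp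
  thus "sig M' y \<in> {Suc (2 * x), 2 * x, 2 * s x}" using y x xc sig_in by auto
next
  assume x: "x \<in> F"
  have "2 * x \<in> orb (sig M') (Suc (2 * x))" using orb_step[OF orb_self, of "sig M'" "Suc (2 * x)"] by simp
  moreover have "2 * s x \<in> orb (sig M') (Suc (2 * x))"
    using orb_step[OF \<open>2 * x \<in> _\<close>] x by simp
  ultimately show "{Suc (2 * x), 2 * x, 2 * s x} \<subseteq> orb (sig M') (Suc (2 * x))" by auto
qed simp

lemma smooth_orb_sig_eq: "n \<in> darts M' \<Longrightarrow> m \<in> orb (sig M') n \<Longrightarrow> orb (sig M') m = orb (sig M') n"
  by (rule orb_eq[OF smooth_sig_bij finite_smooth_darts])

lemma smooth_cross_vertex:
  assumes n: "n \<in> darts M'" and c: "vk M (n div 2) = Cross"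
  obtains x where "x \<in> F" "orb (sig M') n = orb (sig M') (Suc (2 * x))"
proof (rule smooth_darts_cases[OF n])
  fix x assume "x \<in> F" "n = Suc (2 * x)" thus thesis using that by blast
next
  fix d assume d: "d \<in> D" "n = 2 * d"
  have c': "vk M d = Cross" using c d by simp
  show thesis
  proof (cases "d \<in> F")
    case True
    have "sig M' (Suc (2 * d)) = n" using d by simp
    hence "n \<in> orb (sig M') (Suc (2 * d))" using orb_step[OF orb_self] by metis
    hence "orb (sig M') n = orb (sig M') (Suc (2 * d))"
      by (rule smooth_orb_sig_eq[rotated]) (simp add: True)
    thus thesis using that True by blast
  next
    case False
    have xF: "s (s (s d)) \<in> F" using state_sig state_sig2 d c' False sig_in vk_sig by metis
    have "sig M' n = Suc (2 * s (s (s d)))" using d c' False by simp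
    hence "Suc (2 * s (s (s d))) \<in> orb (sig M') n" using orb_step[OF orb_self] by metis
    hence "orb (sig M') (Suc (2 * s (s (s d)))) = orb (sig M') n"
      by (rule smooth_orb_sig_eq[OF n])
    thus thesis using that xF by metis
  qed
qed

lemma smooth_vertices: "orb (sig M') ` darts M' =
   (\<lambda>d. orb (sig M') (2 * d)) ` NC \<union> (\<lambda>x. orb (sig M') (Suc (2 * x))) ` F"
proof (intro equalityI subsetI)
  fix Q assume "Q \<in> orb (sig M') ` darts M'"
  then obtain n where n: "n \<in> darts M'" "Q = orb (sig M') n" by auto
  show "Q \<in> (\<lambda>d. orb (sig M') (2 * d)) ` NC \<union> (\<lambda>x. orb (sig M') (Suc (2 * x))) ` F"
  proof (cases "vk M (n div 2) = Cross")
    case True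
    then obtain x where "x \<in> F" "orb (sig M') n = orb (sig M') (Suc (2 * x))"
      using smooth_cross_vertex[OF n(1)] by blast
    thus ?thesis using n by auto
  next
    case False
    show ?thesis by (rule smooth_darts_cases[OF n(1)]) (use n False state_cross in auto)
  qed
qed auto

lemma card_smooth_vertices: "card (orb (sig M') ` darts M') = card (orb s ` NC) + card F"
proof -
  have finNC: "finite NC" using finite_darts by simp
  have finF: "finite F" using state_cross finite_darts by (meson finite_subset subsetI)
  have disj: "(\<lambda>d. orb (sig M') (2 * d)) ` NC \<inter> (\<lambda>x. orb (sig M') (Suc (2 * x))) ` F = {}"
  proof (rule ccontr)
    assume "\<not> ?thesis"
    then obtain d x where d: "d \<in> NC" and x: "x \<in> F"
      and eq: "orb (sig M') (2 * d) = orb (sig M') (Suc (2 * x))" by auto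
    have "Suc (2 * x) \<in> (\<lambda>e. 2 * e) ` orb s d" using eq smooth_orb_noncross[OF d] orb_self by metis
    thus False by auto
  qed
  have c1: "card ((\<lambda>d. orb (sig M') (2 * d)) ` NC) = card (orb s ` NC)"
  proof (rule card_image_eq_kernel)
    fix d e assume "d \<in> NC" "e \<in> NC"
    thus "(orb (sig M') (2 * d) = orb (sig M') (2 * e)) = (orb s d = orb s e)"
      using smooth_orb_noncross by (simp add: inj_image_eq_iff inj_on_def)
  qed
  have c2: "card ((\<lambda>x. orb (sig M') (Suc (2 * x))) ` F) = card F"
  proof (rule card_image, rule inj_onI)
    fix x y assume x: "x \<in> F" and y: "y \<in> F" and eq: "orb (sig M') (Suc (2 * x)) = orb (sig M') (Suc (2 * y))"
    have "Suc (2 * y) \<in> {Suc (2 * x), 2 * x, 2 * s x}" using smooth_orb_odd[OF x] eq orb_self by blast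
    thus "x = y" by auto
  qed
  show ?thesis unfolding smooth_vertices
    using card_Un_disjoint[OF finite_imageI[OF finNC] finite_imageI[OF finF] disj] c1 c2 by simp
qed

lemma card_vertices_split: "card (orb s ` D) = card (orb s ` NC) + card (orb s ` CC)"
proof -
  have "D = NC \<union> CC" by auto
  hence eq: "orb s ` D = orb s ` NC \<union> orb s ` CC" by auto
  have disj: "orb s ` NC \<inter> orb s ` CC = {}"
  proof (rule ccontr)
    assume "\<not> ?thesis"
    then obtain d c where d: "d \<in> NC" and c: "c \<in> CC" and e: "orb s d = orb s c" by auto
    have "orb s c \<subseteq> CC" by (rule orb_subset_closed) (use c sig_in in auto)
    thus False using e d orb_self by blast
  qed
  show ?thesis unfolding eq by (rule card_Un_disjoint) (use finite_darts disj in auto)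
qed

lemma card_state_orbit:
  assumes c: "c \<in> D" "vk M c = Cross"
  shows "card (F \<inter> orb s c) = 2"
proof -
  obtain x where x: "x \<in> D" "vk M x = Cross" "x \<in> F" and xc: "x \<in> orb s c"
  proof (cases "c \<in> F")
    case False
    have "s c \<in> orb s c" by (rule orb_step[OF orb_self])
    thus thesis using that[of "s c"] c False sig_in state_sig by simp
  qed (use c that in auto)
  have sx: "s x \<in> D" "vk M (s x) = Cross" "s (s x) \<in> D" "vk M (s (s x)) = Cross"
    using x sig_in by auto
  have "s x \<notin> F" "s (s x) \<in> F" "s (s (s x)) \<notin> F"
    using x sx state_sig[OF x(1,2)] state_sig2[OF x(1,2)] state_sig[OF sx(3,4)] by auto
  moreover have "orb s c = {x, s x, s (s x), s (s (s x))}"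
    using orb_sig_eq[OF c(1) xc] orb_sig_cross[OF x(1,2)] by simp
  ultimately have "F \<inter> orb s c = {x, s (s x)}" using x by auto
  thus ?thesis using sig2_neq_cross[OF x(1,2)] by simp
qed

lemma card_state: "card F = 2 * card (orb s ` CC)"
proof -
  have "F = (\<Union>V\<in>orb s ` CC. F \<inter> V)"
  proof (intro equalityI subsetI)
    fix x assume "x \<in> F"
    thus "x \<in> (\<Union>V\<in>orb s ` CC. F \<inter> V)" using state_cross[of x] orb_self[of x s] by blast
  qed blast
  also have "card \<dots> = (\<Sum>V\<in>orb s ` CC. card (F \<inter> V))"
  proof (rule card_UN_disjoint)
    show "finite (orb s ` CC)" using finite_darts by simp
    show "\<forall>V\<in>orb s ` CC. finite (F \<inter> V)" using finite_darts orb_sig_subset by (auto intro: finite_subset)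
    show "\<forall>V1\<in>orb s ` CC. \<forall>V2\<in>orb s ` CC. V1 \<noteq> V2 \<longrightarrow> F \<inter> V1 \<inter> (F \<inter> V2) = {}"
    proof (intro ballI impI equalityI subsetI)
      fix V1 V2 e
      assume "V1 \<in> orb s ` CC" "V2 \<in> orb s ` CC" and ne: "V1 \<noteq> V2"
        and "e \<in> F \<inter> V1 \<inter> (F \<inter> V2)"
      then obtain c1 c2 where "c1 \<in> D" "e \<in> orb s c1" "V1 = orb s c1" "c2 \<in> D" "e \<in> orb s c2" "V2 = orb s c2"
        by blast
      hence "V1 = V2" using orb_sig_eq by metis
      thus "e \<in> {}" using ne by simp
    qed simp
  qed
  also have "\<dots> = (\<Sum>V\<in>orb s ` CC. 2)" using card_state_orbit by (intro sum.cong) auto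
  finally show ?thesis by simp
qed

lemma card_smooth_darts: "card (darts M') = card D + card F"
proof -
  have finF: "finite F" using state_cross finite_darts by (meson finite_subset subsetI)
  have "card (darts M') = card ((\<lambda>d. 2 * d) ` D) + card ((\<lambda>x. 2 * x + 1) ` F)"
    unfolding smooth_darts by (rule card_Un_disjoint) (use finite_darts finF in auto)
  also have "\<dots> = card D + card F" by (simp add: card_image inj_on_def)
  finally show ?thesis .
qed

text \<open>Each crossing becomes two trivalent vertices joined by a new edge: the numbers of vertices
  and of edges both grow by the number of crossings and the faces are unchanged, so the Euler
  characteristic is unchanged.\<close>
lemma smooth_spherical: "spherical_map M'"
proof -
  have sM: "spherical_map M" using spherical .
  have "card (darts M') div 2 = card D div 2 + card (orb s ` CC)"
    using card_smooth_darts card_state by simp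
  thus ?thesis using sM card_smooth_vertices card_vertices_split card_state card_smooth_faces unfolding spherical_map_def
    by (simp add: comp_def)
qed

lemma smooth_wf_map: "wf_map M'"
  unfolding wf_map_def
  using finite_smooth_darts smooth_alph_ok smooth_sig_bij smooth_vk_sig smooth_thick_alph smooth_dr_alph smooth_connected smooth_spherical by blast

lemma smooth_deg_noncross: "d \<in> D \<Longrightarrow> vk M d \<noteq> Cross \<Longrightarrow> deg M' (2 * d) = deg M d"
  unfolding deg_def using smooth_orb_noncross[of d] by (simp add: card_image inj_on_def)

lemma smooth_even_of_kind:
  assumes n: "n \<in> darts M'" and v: "vk M' n = K" and K: "K \<noteq> EmptyV" "K \<noteq> SolidV"
  obtains d where "d \<in> D" "n = 2 * d" "vk M d = K"
proof (rule smooth_darts_cases[OF n])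
  fix x assume "x \<in> F" "n = Suc (2 * x)"
  thus thesis using v K state_cross by (auto split: if_splits)
next
  fix d assume "d \<in> D" "n = 2 * d"
  thus thesis using v K that by (auto split: if_splits)
qed

lemma smooth_unique_kind:
  assumes u: "\<exists>!d. d \<in> D \<and> vk M d = K" and K: "K \<noteq> EmptyV" "K \<noteq> SolidV" "K \<noteq> Cross"
  shows "\<exists>!n. n \<in> darts M' \<and> vk M' n = K"
proof -
  obtain t where t: "t \<in> D" "vk M t = K" and tu: "\<And>d. d \<in> D \<Longrightarrow> vk M d = K \<Longrightarrow> d = t"
    using u by auto
  show ?thesis
  proof (rule ex1I[of _ "2 * t"])
    show "2 * t \<in> darts M' \<and> vk M' (2 * t) = K" using t K by simp
  next
    fix n assume "n \<in> darts M' \<and> vk M' n = K"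
    then obtain d where "d \<in> D" "n = 2 * d" "vk M d = K"
      using smooth_even_of_kind K by metis
    thus "n = 2 * t" using tu by simp
  qed
qed

lemma smooth_trivalent_ok:
  assumes x: "x \<in> F" and o: "orb (sig M') n = {Suc (2 * x), 2 * x, 2 * s x}"
    and th: "thick M x" "thick M (s x)" and dU: "dr M x \<noteq> Unor" "dr M (s x) \<noteq> Unor"
  shows "trivalent_ok M' n"
proof -
  have xc: "x \<in> D" "vk M x = Cross" using state_cross x by auto
  have sx: "s x \<in> D" "s x \<noteq> x" "s x \<notin> F" using sig_in xc sig_neq_cross state_sig x by auto
  have "card {Suc (2 * x), 2 * x, 2 * s x} = 3" using sx by simp
  hence deg3: "deg M' n = 3" using o by (simp add: deg_def)
  have "{e \<in> orb (sig M') n. \<not> thick M' e} = {Suc (2 * x)}" using o th by auto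
  hence thin: "card {e \<in> orb (sig M') n. \<not> thick M' e} = 1" by simp
  have "(dr M x = opp (dr M (s x)) \<and> (if dr M x = dr M (s x) then dr M x else Unor) = Unor)
     \<or> (dr M x = dr M (s x) \<and> (if dr M x = dr M (s x) then dr M x else Unor) = dr M x)"
    using dU by (cases "dr M x"; cases "dr M (s x)") auto
  thus ?thesis unfolding trivalent_ok_def using deg3 thin o th x by (auto simp: Let_def)
qed

lemma smooth_trivalent_vertex:
  assumes kd: "\<And>d. d \<in> D \<Longrightarrow> vk M d \<in> {Tail, Head, Cross, Mark} \<and> thick M d \<and> dr M d \<noteq> Unor"
    and n: "n \<in> darts M'" and v: "vk M' n \<in> {EmptyV, SolidV}"
  shows "trivalent_ok M' n"
proof -
  have "vk M (n div 2) = Cross"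
  proof (rule smooth_darts_cases[OF n])
    fix d assume "d \<in> D" "n = 2 * d"
    thus ?thesis using kd[of d] v by (auto split: if_splits)
  qed (use state_cross in simp)
  then obtain x where x: "x \<in> F" and o: "orb (sig M') n = {Suc (2 * x), 2 * x, 2 * s x}"
    using smooth_cross_vertex[OF n] smooth_orb_odd by metis
  have "x \<in> D" "s x \<in> D" using state_cross x sig_in by auto
  thus ?thesis using smooth_trivalent_ok[OF x o] kd by simp
qed

end

lemma is_lg_smooth:
  assumes k: "is_kd M" and st: "F \<in> states M"
  shows "is_lg (smooth M F)"
proof -
  interpret smoothing M F
    using k st by unfold_locales (simp_all add: is_kd_wf_map is_kd_proper_crossings)
  have kd: "\<And>d. d \<in> D \<Longrightarrow> vk M d \<in> {Tail, Head, Cross, Mark} \<and> thick M d \<and> dr M d \<noteq> Unor"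
    and kd_tail: "\<And>d. d \<in> D \<Longrightarrow> vk M d = Tail \<Longrightarrow> deg M d = 1 \<and> dr M d = Out"
    and kd_head: "\<And>d. d \<in> D \<Longrightarrow> vk M d = Head \<Longrightarrow> deg M d = 1 \<and> dr M d = In"
    and kd_mark: "\<And>d. d \<in> D \<Longrightarrow> vk M d = Mark \<Longrightarrow> deg M d = 2 \<and> dr M (s d) = opp (dr M d)"
    and kd_unique: "\<exists>!d. d \<in> D \<and> vk M d = Tail" "\<exists>!d. d \<in> D \<and> vk M d = Head"
    using k by (simp_all add: is_kd_def)
  have "vk M' n \<in> {Tail, Head, EmptyV, SolidV, Mark} \<and> \<not> over M' n \<and> (thick M' n \<longrightarrow> dr M' n \<noteq> Unor)"
    if "n \<in> darts M'" for n
    using that by (rule smooth_darts_cases) (use kd state_cross in auto)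
  moreover have "deg M' n = 1 \<and> thick M' n \<and> dr M' n = Out"
    if n: "n \<in> darts M'" and v: "vk M' n = Tail" for n
  proof -
    obtain d where "d \<in> D" "n = 2 * d" "vk M d = Tail" using smooth_even_of_kind[OF n v] by auto
    thus ?thesis using kd_tail kd smooth_deg_noncross by simp
  qed
  moreover have "deg M' n = 1 \<and> thick M' n \<and> dr M' n = In"
    if n: "n \<in> darts M'" and v: "vk M' n = Head" for n
  proof -
    obtain d where "d \<in> D" "n = 2 * d" "vk M d = Head" using smooth_even_of_kind[OF n v] by auto
    thus ?thesis using kd_head kd smooth_deg_noncross by simp
  qed
  moreover have "deg M' n = 2 \<and> thick M' (sig M' n) = thick M' n \<and> dr M' (sig M' n) = opp (dr M' n)"
    if n: "n \<in> darts M'" and v: "vk M' n = Mark" for n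
  proof -
    obtain d where "d \<in> D" "n = 2 * d" "vk M d = Mark" using smooth_even_of_kind[OF n v] by auto
    thus ?thesis using kd_mark kd smooth_deg_noncross sig_in by simp
  qed
  moreover have "trivalent_ok M' n" if "n \<in> darts M'" "vk M' n \<in> {EmptyV, SolidV}" for n
    by (rule smooth_trivalent_vertex[OF kd that])
  ultimately show ?thesis unfolding is_lg_altdef
    using smooth_wf_map smooth_unique_kind[OF kd_unique(1)] smooth_unique_kind[OF kd_unique(2)]
    by simp
qed

section \<open>Isomorphisms of maps\<close>

definition isom_at :: "(nat \<Rightarrow> nat) \<Rightarrow> dmap \<Rightarrow> dmap \<Rightarrow> nat \<Rightarrow> bool" where
  "isom_at \<phi> M M' d \<longleftrightarrow> \<phi> (alph M d) = alph M' (\<phi> d) \<and> \<phi> (sig M d) = sig M' (\<phi> d)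
     \<and> vk M' (\<phi> d) = vk M d \<and> dr M' (\<phi> d) = dr M d \<and> thick M' (\<phi> d) = thick M d
     \<and> over M' (\<phi> d) = over M d"

definition isom :: "(nat \<Rightarrow> nat) \<Rightarrow> dmap \<Rightarrow> dmap \<Rightarrow> bool" where
  "isom \<phi> M M' \<longleftrightarrow> bij_betw \<phi> (darts M) (darts M') \<and> (\<forall>d\<in>darts M. isom_at \<phi> M M' d)"

definition smooth_lift :: "(nat \<Rightarrow> nat) \<Rightarrow> nat \<Rightarrow> nat" where
  "smooth_lift \<phi> n = (if even n then 2 * \<phi> (n div 2) else Suc (2 * \<phi> (n div 2)))"

lemma smooth_lift_even [simp]: "smooth_lift \<phi> (2 * d) = 2 * \<phi> d"
  and smooth_lift_odd [simp]: "smooth_lift \<phi> (Suc (2 * d)) = Suc (2 * \<phi> d)"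
  by (simp_all add: smooth_lift_def)

lemma iso_iff_isom: "iso M N \<longleftrightarrow> (\<exists>\<phi>. isom \<phi> M N)"
  by (simp add: iso_def isom_def isom_at_def)

lemma isom_idI:
  "darts A = darts B \<Longrightarrow> (\<And>n. n \<in> darts A \<Longrightarrow> isom_at id A B n) \<Longrightarrow> isom id A B"
  by (simp add: isom_def)

locale dmap_isom = wf_dmap M for M +
  fixes \<phi> :: "nat \<Rightarrow> nat" and N :: dmap
  assumes isom: "isom \<phi> M N"
begin

abbreviation "D \<equiv> darts M"
abbreviation "D' \<equiv> darts N"

lemma bij: "bij_betw \<phi> D D'"
  using isom by (simp add: isom_def)

lemma inj: "inj_on \<phi> D"
  using bij by (simp add: bij_betw_def)

lemma image_darts: "\<phi> ` D = D'"
  using bij by (simp add: bij_betw_def)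

lemma phi_in: "d \<in> D \<Longrightarrow> \<phi> d \<in> D'"
  using image_darts by auto

lemma phi_eq_iff: "d \<in> D \<Longrightarrow> e \<in> D \<Longrightarrow> \<phi> d = \<phi> e \<longleftrightarrow> d = e"
  using inj by (meson inj_on_contraD)

lemma target_darts_cases: "d' \<in> D' \<Longrightarrow> (\<And>d. d \<in> D \<Longrightarrow> d' = \<phi> d \<Longrightarrow> P) \<Longrightarrow> P"
  using image_darts by auto

lemma alph_target [simp]: "d \<in> D \<Longrightarrow> alph N (\<phi> d) = \<phi> (alph M d)"
  and sig_target [simp]: "d \<in> D \<Longrightarrow> sig N (\<phi> d) = \<phi> (sig M d)"
  and vk_target [simp]: "d \<in> D \<Longrightarrow> vk N (\<phi> d) = vk M d"
  and dr_target [simp]: "d \<in> D \<Longrightarrow> dr N (\<phi> d) = dr M d"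
  and thick_target [simp]: "d \<in> D \<Longrightarrow> thick N (\<phi> d) = thick M d"
  and over_target [simp]: "d \<in> D \<Longrightarrow> over N (\<phi> d) = over M d"
  using isom by (simp_all add: isom_def isom_at_def)

lemma finite_target: "finite D'"
  unfolding image_darts[symmetric] using finite_darts by simp

lemma orb_sig_target: "d \<in> D \<Longrightarrow> orb (sig N) (\<phi> d) = \<phi> ` orb (sig M) d"
  by (rule orb_image[where S = D]) (auto simp: sig_in)

lemma orb_face_target: "d \<in> D \<Longrightarrow> orb (sig N \<circ> alph N) (\<phi> d) = \<phi> ` orb (sig M \<circ> alph M) d"
  by (rule orb_image[where S = D]) (auto simp: sig_in alph_in)

lemma deg_target: "d \<in> D \<Longrightarrow> deg N (\<phi> d) = deg M d"
  unfolding deg_def using orb_sig_target orb_sig_subset inj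
  by (simp add: card_image inj_on_subset)

lemma card_orbits_target:
  assumes "\<And>d. d \<in> D \<Longrightarrow> orb g (\<phi> d) = \<phi> ` orb f d" "\<And>d. d \<in> D \<Longrightarrow> orb f d \<subseteq> D"
  shows "card (orb g ` D') = card (orb f ` D)"
proof -
  have "orb g ` D' = (\<lambda>d. orb g (\<phi> d)) ` D"
    unfolding image_darts[symmetric] by (simp add: image_image)
  also have "card \<dots> = card (orb f ` D)"
    by (rule card_image_eq_kernel) (use assms inj_on_image_eq_iff[OF inj] in simp)
  finally show ?thesis .
qed

lemma sig_target_bij: "bij_betw (sig N) D' D'"
proof -
  have "inj_on (sig N) D'"
  proof (rule inj_onI)
    fix x y assume "x \<in> D'" "y \<in> D'" "sig N x = sig N y"
    thus "x = y" by (elim target_darts_cases) (metis sig_target phi_eq_iff sig_in sig_inj)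
  qed
  moreover have "sig N ` D' \<subseteq> D'"
    by (auto elim!: target_darts_cases simp: sig_in phi_in)
  ultimately show ?thesis using endo_inj_surj[OF finite_target] by (simp add: bij_betw_def)
qed

lemma adj_target: "(d, e) \<in> (adj M)\<^sup>* \<Longrightarrow> d \<in> D \<Longrightarrow> (\<phi> d, \<phi> e) \<in> (adj N)\<^sup>* \<and> e \<in> D"
proof (induction rule: rtrancl_induct)
  case (step e f)
  hence e: "e \<in> D" "(\<phi> d, \<phi> e) \<in> (adj N)\<^sup>*" by auto
  from step(2) have "f = sig M e \<or> f = alph M e" by (auto simp: adj_def)
  hence "(\<phi> e, \<phi> f) \<in> adj N \<and> f \<in> D"
    using e phi_in sig_in alph_in by (auto simp: adj_def)
  thus ?case using e by (meson rtrancl.rtrancl_into_rtrancl)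
qed simp

lemma wf_target: "wf_map N"
proof -
  have "connected_map N" unfolding connected_map_def
    by (auto elim!: target_darts_cases dest: adj_target[OF connected])
  moreover have "spherical_map N"
  proof -
    have "card (orb (sig N) ` D') = card (orb (sig M) ` D)"
      by (rule card_orbits_target[OF orb_sig_target orb_sig_subset])
    moreover have "card (orb (sig N \<circ> alph N) ` D') = card (orb (sig M \<circ> alph M) ` D)"
      by (rule card_orbits_target[OF orb_face_target orb_subset_bij_betw[OF face_bij]])
    moreover have "card D' = card D" using bij by (metis bij_betw_same_card)
    ultimately show ?thesis using spherical by (simp add: spherical_map_def)
  qed
  moreover have "\<forall>d'\<in>D'. alph N d' \<in> D' \<and> alph N (alph N d') = d' \<and> alph N d' \<noteq> d'"
    by (auto elim!: target_darts_cases simp: alph_in phi_in phi_eq_iff alph_neq)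
  moreover have "\<forall>d'\<in>D'. vk N (sig N d') = vk N d' \<and> thick N (alph N d') = thick N d'
                         \<and> dr N (alph N d') = opp (dr N d')"
    by (auto elim!: target_darts_cases simp: sig_in alph_in)
  ultimately show ?thesis unfolding wf_map_def using finite_target sig_target_bij by blast
qed

lemma proper_crossings_target: "proper_crossings M \<Longrightarrow> proper_crossings N"
  unfolding proper_crossings_def
  by (auto elim!: target_darts_cases simp: sig_in phi_eq_iff)

lemma unique_kind_target: "\<exists>!d. d \<in> D \<and> vk M d = K \<Longrightarrow> \<exists>!d'. d' \<in> D' \<and> vk N d' = K"
  by (metis phi_in target_darts_cases vk_target)

lemma trivalent_ok_target:
  assumes d: "d \<in> D" and ok: "trivalent_ok M d"
  shows "trivalent_ok N (\<phi> d)"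
proof -
  have oD: "orb (sig M) d \<subseteq> D" using orb_sig_subset[OF d] .
  have o: "orb (sig N) (\<phi> d) = \<phi> ` orb (sig M) d" using orb_sig_target[OF d] .
  have thin: "{e \<in> \<phi> ` orb (sig M) d. \<not> thick N e} = \<phi> ` {e \<in> orb (sig M) d. \<not> thick M e}"
    using oD by auto
  have "card (\<phi> ` {e \<in> orb (sig M) d. \<not> thick M e}) = card {e \<in> orb (sig M) d. \<not> thick M e}"
    by (rule card_image, rule inj_on_subset[OF inj]) (use oD in blast)
  moreover have "\<forall>e\<in>orb (sig M) d. \<not> thick N (\<phi> e) \<longrightarrow>
            (let a = sig N (\<phi> e); b = sig N (sig N (\<phi> e)) in
              (dr N a = opp (dr N b) \<and> dr N (\<phi> e) = Unor) \<or> (dr N a = dr N b \<and> dr N (\<phi> e) = dr N a))"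
    using ok oD sig_in unfolding trivalent_ok_def by (auto simp: Let_def subset_iff)
  ultimately show ?thesis
    using ok unfolding trivalent_ok_def deg_target[OF d] o thin by simp
qed

lemma is_lg_target:
  assumes lg: "is_lg M"
  shows "is_lg N"
proof -
  note L = lg[unfolded is_lg_altdef]
  have lift: "\<forall>d'\<in>D'. P d'" if "\<And>d. d \<in> D \<Longrightarrow> P (\<phi> d)" for P
    using that by (auto elim!: target_darts_cases)
  have "\<exists>!d. d \<in> D \<and> vk M d = Tail" "\<exists>!d. d \<in> D \<and> vk M d = Head"
    using lg by (simp_all add: is_lg_def)
  hence "\<exists>!d'. d' \<in> D' \<and> vk N d' = Tail" "\<exists>!d'. d' \<in> D' \<and> vk N d' = Head"
    by (simp_all add: unique_kind_target)
  moreover have "\<forall>d'\<in>D'. vk N d' \<in> {Tail, Head, EmptyV, SolidV, Mark} \<and> \<not> over N d'"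
    by (rule lift) (use L in simp)
  moreover have "\<forall>d'\<in>D'. thick N d' \<longrightarrow> dr N d' \<noteq> Unor"
    by (rule lift) (use L in simp)
  moreover have "\<forall>d'\<in>D'. vk N d' = Tail \<longrightarrow> deg N d' = 1 \<and> thick N d' \<and> dr N d' = Out"
    by (rule lift) (use L in \<open>simp add: deg_target\<close>)
  moreover have "\<forall>d'\<in>D'. vk N d' = Head \<longrightarrow> deg N d' = 1 \<and> thick N d' \<and> dr N d' = In"
    by (rule lift) (use L in \<open>simp add: deg_target\<close>)
  moreover have "\<forall>d'\<in>D'. vk N d' \<in> {EmptyV, SolidV} \<longrightarrow> trivalent_ok N d'"
    by (rule lift) (use L trivalent_ok_target in simp)
  moreover have "\<forall>d'\<in>D'. vk N d' = Mark \<longrightarrow> deg N d' = 2 \<and> thick N (sig N d') = thick N d'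
      \<and> dr N (sig N d') = opp (dr N d')"
    by (rule lift) (use L in \<open>simp add: deg_target sig_in\<close>)
  ultimately show ?thesis unfolding is_lg_altdef using wf_target by (intro conjI) assumption+
qed
lemma positive_target: "d \<in> D \<Longrightarrow> positive N (\<phi> d) = positive M d"
  unfolding positive_def orb_sig_target
  using orb_sig_subset by (auto simp: sig_in subset_iff)

lemma smA_target: "d \<in> D \<Longrightarrow> smA N (\<phi> d) = smA M d"
  unfolding smA_def using positive_target sig_in by simp

lemma image_mem_iff: "F \<subseteq> D \<Longrightarrow> e \<in> D \<Longrightarrow> \<phi> e \<in> \<phi> ` F \<longleftrightarrow> e \<in> F"
  using inj by (auto simp: inj_on_image_mem_iff)

lemma states_target: "F \<in> states M \<Longrightarrow> \<phi> ` F \<in> states N"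
  unfolding states_def
proof (elim CollectE conjE, intro CollectI conjI)
  assume F: "F \<subseteq> {d \<in> D. vk M d = Cross}" and
    c: "\<forall>d\<in>D. vk M d = Cross \<longrightarrow> (d \<in> F) = (sig M (sig M d) \<in> F) \<and> (d \<in> F) = (sig M d \<notin> F)"
  have FD: "F \<subseteq> D" using F by blast
  show "\<phi> ` F \<subseteq> {d' \<in> D'. vk N d' = Cross}" using F phi_in by auto
  show "\<forall>d'\<in>D'. vk N d' = Cross \<longrightarrow> (d' \<in> \<phi> ` F) = (sig N (sig N d') \<in> \<phi> ` F) \<and>
        (d' \<in> \<phi> ` F) = (sig N d' \<notin> \<phi> ` F)"
  proof (intro ballI impI)
    fix d' assume "d' \<in> D'" "vk N d' = Cross"
    then obtain d where d: "d \<in> D" "d' = \<phi> d" "vk M d = Cross" by (metis target_darts_cases vk_target)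
    have "(d \<in> F) = (sig M (sig M d) \<in> F) \<and> (d \<in> F) = (sig M d \<notin> F)" using c d by blast
    thus "(d' \<in> \<phi> ` F) = (sig N (sig N d') \<in> \<phi> ` F) \<and> (d' \<in> \<phi> ` F) = (sig N d' \<notin> \<phi> ` F)"
      using d sig_in image_mem_iff[OF FD] by (simp; blast)
  qed
qed

lemma isom_inv_into: "isom (inv_into D \<phi>) N M"
  unfolding isom_def isom_at_def
proof (intro conjI ballI)
  show "bij_betw (inv_into D \<phi>) D' D" using bij by (rule bij_betw_inv_into)
  fix d' assume "d' \<in> D'"
  then obtain d where d: "d \<in> D" "d' = \<phi> d" by (rule target_darts_cases)
  show "inv_into D \<phi> (alph N d') = alph M (inv_into D \<phi> d')"
    and "inv_into D \<phi> (sig N d') = sig M (inv_into D \<phi> d')"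
    and "vk M (inv_into D \<phi> d') = vk N d'" and "dr M (inv_into D \<phi> d') = dr N d'"
    and "thick M (inv_into D \<phi> d') = thick N d'" and "over M (inv_into D \<phi> d') = over N d'"
    using d alph_in sig_in inj by simp_all
qed

lemma inverse: "dmap_isom N (inv_into D \<phi>) M"
  using wf_target isom_inv_into by unfold_locales

lemma states_target_eq: "states N = (\<lambda>F. \<phi> ` F) ` states M"
proof
  show "(\<lambda>F. \<phi> ` F) ` states M \<subseteq> states N" using states_target by blast
next
  show "states N \<subseteq> (\<lambda>F. \<phi> ` F) ` states M"
  proof
    fix G assume G: "G \<in> states N"
    have "inv_into D \<phi> ` G \<in> states M" using dmap_isom.states_target[OF inverse G] .
    moreover have "G \<subseteq> D'" using G by (auto simp: states_def)
    hence "\<phi> ` (inv_into D \<phi> ` G) = G" using image_darts by (simp add: image_inv_into_cancel)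
    ultimately show "G \<in> (\<lambda>F. \<phi> ` F) ` states M" by (metis image_eqI)
  qed
qed

lemma inj_on_image_states: "inj_on (\<lambda>F. \<phi> ` F) (states M)"
proof (rule inj_onI)
  fix F G assume "F \<in> states M" "G \<in> states M" "\<phi> ` F = \<phi> ` G"
  moreover have "F \<subseteq> D" "G \<subseteq> D" using calculation by (auto simp: states_def)
  ultimately show "F = G" using inj by (meson inj_on_image_eq_iff)
qed

lemma smooth_isom:
  assumes st: "F \<in> states M"
  shows "isom (smooth_lift \<phi>) (smooth M F) (smooth N (\<phi> ` F))"
proof -
  have FD: "\<And>x. x \<in> F \<Longrightarrow> x \<in> D" using st by (auto simp: states_def)
  have memF: "\<And>e. e \<in> D \<Longrightarrow> \<phi> e \<in> \<phi> ` F \<longleftrightarrow> e \<in> F"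
    using image_mem_iff FD by blast
  let ?M' = "smooth M F" and ?N' = "smooth N (\<phi> ` F)"
  have img2: "smooth_lift \<phi> ` darts ?M' = darts ?N'"
  proof -
    have "smooth_lift \<phi> ` darts ?M' = (\<lambda>d. 2 * \<phi> d) ` D \<union> (\<lambda>x. Suc (2 * \<phi> x)) ` F"
      unfolding smooth_darts image_Un image_image by simp
    also have "\<dots> = (\<lambda>d. 2 * d) ` (\<phi> ` D) \<union> (\<lambda>x. 2 * x + 1) ` (\<phi> ` F)"
      by (simp add: image_image)
    also have "\<dots> = darts ?N'" unfolding smooth_darts image_darts ..
    finally show ?thesis .
  qed
  have inj2: "inj_on (smooth_lift \<phi>) (darts ?M')"
    by (auto simp: inj_on_def phi_eq_iff FD elim!: smooth_darts_cases)
  have fd: "\<And>d. d \<in> D \<Longrightarrow> firstd N (\<phi> ` F) (\<phi> d) = \<phi> (firstd M F d)"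
    using memF sig_in by (simp add: firstd_eq)
  have fdD: "\<And>d. d \<in> D \<Longrightarrow> firstd M F d \<in> D"
    using sig_in by (simp add: firstd_eq)
  show ?thesis unfolding isom_def isom_at_def
  proof (intro conjI ballI)
    show "bij_betw (smooth_lift \<phi>) (darts ?M') (darts ?N')" using inj2 img2 by (simp add: bij_betw_def)
  next
    fix n assume n: "n \<in> darts ?M'"
    show "smooth_lift \<phi> (alph ?M' n) = alph ?N' (smooth_lift \<phi> n)"
      by (rule smooth_darts_cases[OF n]) (use FD sig_in alph_in in simp_all)
    show "smooth_lift \<phi> (sig ?M' n) = sig ?N' (smooth_lift \<phi> n)"
      by (rule smooth_darts_cases[OF n]) (use FD sig_in memF in simp_all)
    show "vk ?N' (smooth_lift \<phi> n) = vk ?M' n"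
      by (rule smooth_darts_cases[OF n]) (use FD fd fdD smA_target in simp_all)
    show "dr ?N' (smooth_lift \<phi> n) = dr ?M' n"
      by (rule smooth_darts_cases[OF n]) (use FD sig_in in simp_all)
    show "thick ?N' (smooth_lift \<phi> n) = thick ?M' n"
      by (rule smooth_darts_cases[OF n]) (use FD in simp_all)
    show "over ?N' (smooth_lift \<phi> n) = over ?M' n" by simp
  qed
qed

lemma is_lg_smooth_target:
  assumes lg: "\<And>G. G \<in> states M \<Longrightarrow> is_lg (smooth M G)" and F: "F \<in> states N"
  shows "is_lg (smooth N F)"
proof -
  obtain G where G: "G \<in> states M" "F = \<phi> ` G" using F states_target_eq by auto
  have lgG: "is_lg (smooth M G)" using lg[OF G(1)] .
  interpret smooth: dmap_isom "smooth M G" "smooth_lift \<phi>" "smooth N (\<phi> ` G)"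
    using smooth_isom[OF G(1)] lgG by unfold_locales (simp add: is_lg_def)
  show ?thesis using smooth.is_lg_target[OF lgG] G(2) by simp
qed

end

section \<open>The relations of the module of label graphs\<close>

lemma lrel_sum: "(\<And>x. x \<in> A \<Longrightarrow> f x \<in> lrel s1 s2 ht or3) \<Longrightarrow> sum f A \<in> lrel s1 s2 ht or3"
proof (induction A rule: infinite_finite_induct)
  case (insert x F)
  have "f x + sum f F \<in> lrel s1 s2 ht or3" using insert by (intro lrel.rel_add) auto
  thus ?case by (simp only: sum.insert[OF insert.hyps])
qed (simp_all add: lrel.rel_zero)

lemma SG_eq_refl [simp]: "SG_eq s1 s2 ht or3 a a"
  by (simp add: SG_eq_def lrel.rel_zero)

lemma SG_eq_sym: "SG_eq s1 s2 ht or3 a b \<Longrightarrow> SG_eq s1 s2 ht or3 b a"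
  unfolding SG_eq_def using lrel.rel_neg by fastforce

lemma SG_eq_trans [trans]: "SG_eq s1 s2 ht or3 a b \<Longrightarrow> SG_eq s1 s2 ht or3 b c \<Longrightarrow> SG_eq s1 s2 ht or3 a c"
  unfolding SG_eq_def using lrel.rel_add by fastforce

lemma SG_eq_sum:
  "(\<And>x. x \<in> A \<Longrightarrow> SG_eq s1 s2 ht or3 (f x) (g x)) \<Longrightarrow>
   SG_eq s1 s2 ht or3 (\<Sum>x\<in>A. f x) (\<Sum>x\<in>A. g x)"
  unfolding SG_eq_def sum_subtractf[symmetric] by (rule lrel_sum)

lemma SG_eq_subdiv: "is_lg G \<Longrightarrow> is_lg G' \<Longrightarrow> subdiv G G' \<Longrightarrow> SG_eq s1 s2 ht or3 (gen G) (gen G')"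
  unfolding SG_eq_def by (rule lrel.rel_sub)

lemma SG_eq_iso: "is_lg G \<Longrightarrow> is_lg G' \<Longrightarrow> iso G G' \<Longrightarrow> SG_eq s1 s2 ht or3 (gen G) (gen G')"
  unfolding SG_eq_def by (rule lrel.rel_iso)

context dmap_isom
begin

lemma lbracket_target:
  assumes lg: "\<And>F. F \<in> states M \<Longrightarrow> is_lg (smooth M F)"
  shows "SG_eq s1 s2 ht or3 (lbracket M) (lbracket N)"
proof -
  have "lbracket N = (\<Sum>F\<in>states M. gen (smooth N (\<phi> ` F)))"
    unfolding lbracket_def states_target_eq
    by (rule sum.reindex[OF inj_on_image_states, unfolded comp_def])
  moreover have "SG_eq s1 s2 ht or3 (gen (smooth M F)) (gen (smooth N (\<phi> ` F)))"
    if F: "F \<in> states M" for F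
  proof (rule SG_eq_iso)
    show "is_lg (smooth M F)" using lg[OF F] .
    then interpret smooth: dmap_isom "smooth M F" "smooth_lift \<phi>" "smooth N (\<phi> ` F)"
      using smooth_isom[OF F] by unfold_locales (simp add: is_lg_def)
    show "is_lg (smooth N (\<phi> ` F))" using smooth.is_lg_target[OF lg[OF F]] .
    show "iso (smooth M F) (smooth N (\<phi> ` F))" using smooth_isom[OF F] by (auto simp: iso_iff_isom)
  qed
  ultimately show ?thesis unfolding lbracket_def by (simp add: SG_eq_sum)
qed

end

lemma lbracket_iso:
  assumes "iso M N" "is_kd M"
  shows "SG_eq s1 s2 ht or3 (lbracket M) (lbracket N)"
proof -
  obtain \<phi> where "isom \<phi> M N" using assms(1) by (auto simp: iso_iff_isom)
  then interpret dmap_isom M \<phi> N using is_kd_wf_map[OF assms(2)] by unfold_locales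
  show ?thesis using lbracket_target is_lg_smooth[OF assms(2)] by blast
qed

section \<open>Subdivision\<close>

locale subdivision = wf_dmap M for M +
  fixes x a b :: nat
  assumes x: "x \<in> darts M" and fresh: "a \<notin> darts M" "b \<notin> darts M" "a \<noteq> b"
begin

abbreviation "S \<equiv> subdivide M x a b"

lemma darts_S: "darts S = darts M \<union> {a, b}"
  by (simp add: subdivide_def)

lemma S_on_darts:
  assumes "d \<in> darts M"
  shows "sig S d = sig M d" "vk S d = vk M d" "dr S d = dr M d" "over S d = over M d"
    "thick S d = thick M d" "alph S d = (if d = x then a else if d = alph M x then b else alph M d)"
  using assms fresh by (auto simp: subdivide_def)

lemma smA_S: "d \<in> darts M \<Longrightarrow> smA S d = smA M d"
  by (rule smA_cong[where S = "darts M"]) (simp_all add: sig_in S_on_darts)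

lemma states_S: "states S = states M"
  by (rule states_cong) (auto simp: crossings_def darts_S S_on_darts sig_in, auto simp: subdivide_def)

lemma smooth_subdivide:
  assumes F: "F \<in> states M"
  shows "isom id (smooth S F) (subdivide (smooth M F) (2 * x) (2 * a) (2 * b))"
proof (rule isom_idI)
  let ?R = "subdivide (smooth M F) (2 * x) (2 * a) (2 * b)"
  show "darts (smooth S F) = darts ?R"
    by (auto simp: smooth_darts darts_S subdivide_def)
  have FD: "\<And>y. y \<in> F \<Longrightarrow> y \<in> darts M \<and> vk M y = Cross" using F by (auto simp: states_def)
  have fd: "firstd S F d = firstd M F d" "firstd M F d \<in> darts M" if "d \<in> darts M" for d
    using that sig_in S_on_darts by (simp_all add: firstd_eq)
  have new: "d \<noteq> a" "d \<noteq> b" if "d \<in> darts M" for d using that fresh by auto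
  fix n assume n: "n \<in> darts (smooth S F)"
  show "isom_at id (smooth S F) ?R n"
  proof (rule smooth_darts_cases[OF n])
    fix y assume y: "y \<in> F" "n = Suc (2 * y)"
    have "y \<in> darts M" "sig M y \<in> darts M" "sig M (sig M y) \<in> darts M" "vk M y = Cross"
      using FD y sig_in by auto
    moreover have "alph ?R n = alph (smooth M F) n" "sig ?R n = sig (smooth M F) n"
      "vk ?R n = vk (smooth M F) n" "dr ?R n = dr (smooth M F) n" "thick ?R n = thick (smooth M F) n"
      "over ?R n = False"
      using y by (simp_all add: subdivide_def)
    ultimately show ?thesis unfolding isom_at_def id_apply using y fd smA_S by (simp add: S_on_darts)
  next
    fix d assume d: "d \<in> darts S" "n = 2 * d"
    show ?thesis
    proof (cases "d \<in> darts M")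
      case True
      have "sig M d \<in> darts M" "sig M (sig M d) \<in> darts M" "sig M (sig M (sig M d)) \<in> darts M"
        using sig_in True by auto
      moreover have "(2 * d = 2 * alph M x) = (d = alph M x)" "(2 * d = 2 * x) = (d = x)" by auto
      ultimately show ?thesis unfolding isom_at_def id_apply
        using d True new[OF True] fd[OF True] smA_S S_on_darts[OF True]
        by (simp only: smooth_alph_even smooth_sig_even smooth_vk_even smooth_dr_even smooth_thick_even
            smooth_over S_on_darts) (auto simp: subdivide_def)
    next
      case False
      hence "d = a \<or> d = b" using d darts_S by auto
      thus ?thesis unfolding isom_at_def using d fresh x new[OF x] by (auto simp: subdivide_def)
    qed
  qed
qed

end

lemma lbracket_subdiv:
  assumes k: "is_kd M" and k': "is_kd M'" and sd: "subdiv M M'"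
  shows "SG_eq s1 s2 ht or3 (lbracket M) (lbracket M')"
proof -
  obtain x a b where xab: "x \<in> darts M" "a \<notin> darts M" "b \<notin> darts M" "a \<noteq> b"
    and i: "iso M' (subdivide M x a b)" using sd by (auto simp: subdiv_def)
  interpret subdivision M x a b using is_kd_wf_map[OF k] xab by unfold_locales
  obtain \<phi> where \<phi>: "isom \<phi> M' S" using i by (auto simp: iso_iff_isom)
  interpret M': dmap_isom M' \<phi> S using \<phi> is_kd_wf_map[OF k'] by unfold_locales
  have "SG_eq s1 s2 ht or3 (gen (smooth M F)) (gen (smooth S F))" if F: "F \<in> states M" for F
  proof (rule SG_eq_subdiv)
    show "subdiv (smooth M F) (smooth S F)"
      unfolding subdiv_def iso_iff_isom using xab smooth_subdivide[OF F]
      by (intro exI[of _ "2 * x"] exI[of _ "2 * a"] exI[of _ "2 * b"]) auto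
    show "is_lg (smooth M F)" "is_lg (smooth S F)"
      using is_lg_smooth[OF k F] M'.is_lg_smooth_target[OF is_lg_smooth[OF k']] F states_S by auto
  qed
  hence "SG_eq s1 s2 ht or3 (lbracket M) (lbracket S)"
    unfolding lbracket_def states_S by (rule SG_eq_sum)
  moreover have "SG_eq s1 s2 ht or3 (lbracket M') (lbracket S)"
    by (rule lbracket_iso[OF i k'])
  ultimately show ?thesis by (blast intro: SG_eq_trans SG_eq_sym)
qed

section \<open>Smoothing the context of a tangle\<close>

definition shift_map :: "nat \<Rightarrow> dmap \<Rightarrow> dmap" where
  "shift_map K N = \<lparr>darts = (\<lambda>n. n + K) ` darts N, alph = (\<lambda>n. alph N (n - K) + K),
     sig = (\<lambda>n. sig N (n - K) + K), vk = (\<lambda>n. vk N (n - K)), dr = (\<lambda>n. dr N (n - K)),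
     thick = (\<lambda>n. thick N (n - K)), over = (\<lambda>n. over N (n - K))\<rparr>"

lemma darts_shift_map: "darts (shift_map K N) = (\<lambda>n. n + K) ` darts N"
  by (simp add: shift_map_def)

lemma shift_map_simps [simp]:
  "n + K \<in> darts (shift_map K N) \<longleftrightarrow> n \<in> darts N"
  "alph (shift_map K N) (n + K) = alph N n + K" "sig (shift_map K N) (n + K) = sig N n + K"
  "vk (shift_map K N) (n + K) = vk N n" "dr (shift_map K N) (n + K) = dr N n"
  "thick (shift_map K N) (n + K) = thick N n" "over (shift_map K N) (n + K) = over N n"
  by (auto simp: shift_map_def)

lemma wf_map_shift_map: "wf_map N \<Longrightarrow> wf_map (shift_map K N)"
proof -
  assume "wf_map N"
  moreover have "isom (\<lambda>n. n + K) N (shift_map K N)"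
    by (auto simp: isom_def isom_at_def darts_shift_map bij_betw_def inj_on_def)
  ultimately interpret dmap_isom N "\<lambda>n. n + K" "shift_map K N" by unfold_locales
  show ?thesis by (rule wf_target)
qed

text \<open>The darts of the smoothed context are moved above \<open>K\<close> so that they stay disjoint from
  those of the tangle.\<close>
definition smoothed_ctx :: "nat \<Rightarrow> dmap \<Rightarrow> nat set \<Rightarrow> dmap" where
  "smoothed_ctx K C B = shift_map K (smooth C B)"

definition shifted_match :: "nat \<Rightarrow> (nat \<Rightarrow> nat) \<Rightarrow> nat \<Rightarrow> nat" where
  "shifted_match K m x = 2 * m x + K"

lemma minv_apply: "x \<in> bdarts T \<Longrightarrow> inj_on m (bdarts T) \<Longrightarrow> minv T m (m x) = x"
  unfolding minv_def by (rule the_equality) (auto simp: inj_on_def)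

lemma glue_darts: "darts (glue T C m) = (darts T - bdarts T) \<union> (darts C - bdarts C)"
  and glue_sig: "sig (glue T C m) d = (if d \<in> darts T then sig T d else sig C d)"
  and glue_vk: "vk (glue T C m) d = (if d \<in> darts T then vk T d else vk C d)"
  and glue_dr: "dr (glue T C m) d = (if d \<in> darts T then dr T d else dr C d)"
  and glue_thick: "thick (glue T C m) d = (if d \<in> darts T then thick T d else thick C d)"
  and glue_over: "over (glue T C m) d = (if d \<in> darts T then over T d else over C d)"
  by (simp_all add: glue_def)

lemma glue_alph: "alph (glue T C m) x = (if x \<in> darts T then
                   (let y = alph T x in
                     if y \<in> bdarts T then
                       (let z = alph C (m y) in if z \<in> bdarts C then alph T (minv T m z) else z)
                     else y)
                 else (let z = alph C x in if z \<in> bdarts C then alph T (minv T m z) else z))"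
  by (simp add: glue_def)

text \<open>\<open>double\<close> stays folded so that the simplifier cannot distribute \<open>2 * (n + K)\<close>
  before the equations for \<open>smooth\<close> at even darts apply.\<close>
definition double :: "nat \<Rightarrow> nat" where
  "double k = 2 * k"

lemma smooth_double_simps:
  "alph (smooth N F) (double k) = 2 * alph N k"
  "vk N k \<noteq> Cross \<Longrightarrow> sig (smooth N F) (double k) = double (sig N k)"
  "vk (smooth N F) (double k) =
     (if vk N k = Cross then (if smA N (firstd N F k) then EmptyV else SolidV) else vk N k)"
  "dr (smooth N F) (double k) = dr N k" "thick (smooth N F) (double k) = thick N k"
  "over (smooth N F) (double k) = False"
  by (simp_all add: double_def)

text \<open>The isomorphism from the smoothing of the glued diagram in state \<open>A \<union> B\<close> to the smoothing
  in state \<open>A\<close> of the tangle glued to the context smoothed in state \<open>B\<close>.\<close>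
definition smooth_glue_map :: "nat set \<Rightarrow> nat \<Rightarrow> nat \<Rightarrow> nat" where
  "smooth_glue_map X K n = (if n div 2 \<in> X then n else double (n + K))"

locale glued_kd =
  fixes T C :: dmap and m :: "nat \<Rightarrow> nat" and K :: nat
  assumes glue_ok: "glue_ok T C m"
    and proper_glue: "proper_crossings (glue T C m)"
    and no_Bdry: "\<And>d. d \<in> darts (glue T C m) \<Longrightarrow> vk (glue T C m) d \<noteq> Bdry"
    and lg_glue: "\<And>F. F \<in> states (glue T C m) \<Longrightarrow> is_lg (smooth (glue T C m) F)"
    and K_bound: "\<And>d. d \<in> darts T \<Longrightarrow> d < K"
begin

abbreviation "G \<equiv> glue T C m"
abbreviation "bT \<equiv> bdarts T"
abbreviation "bC \<equiv> bdarts C"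
abbreviation "TN \<equiv> darts T - bdarts T"
abbreviation "CN \<equiv> darts C - bdarts C"
abbreviation "Cs B \<equiv> smoothed_ctx K C B"
abbreviation "ms \<equiv> shifted_match K m"
abbreviation "GB B \<equiv> glue T (Cs B) ms"

sublocale T: wf_dmap T
  using glue_ok by unfold_locales (simp add: glue_ok_def)

sublocale C: wf_dmap C
  using glue_ok by unfold_locales (simp add: glue_ok_def)

lemma m_bij: "bij_betw m bT bC"
  and m_sig: "x \<in> bT \<Longrightarrow> sig C (m (sig T x)) = m x"
  and alph_bT: "x \<in> bT \<Longrightarrow> alph T x \<notin> bT"
  and TN_CN_disjoint: "TN \<inter> CN = {}"
  using glue_ok by (simp_all add: glue_ok_def)

lemma m_in: "x \<in> bT \<Longrightarrow> m x \<in> bC"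
  using m_bij by (meson bij_betwE)

lemma m_inj: "inj_on m bT"
  using m_bij by (simp add: bij_betw_def)

lemma minv_in: "z \<in> bC \<Longrightarrow> minv T m z \<in> bT"
proof -
  assume "z \<in> bC"
  then obtain x where x: "x \<in> bT" "m x = z" using m_bij by (metis bij_betw_iff_bijections)
  thus ?thesis using minv_apply[OF x(1) m_inj] by simp
qed

lemma bdarts_in: "x \<in> bT \<Longrightarrow> x \<in> darts T" "x \<in> bC \<Longrightarrow> x \<in> darts C"
  by (simp_all add: bdarts_def)

lemma CN_not_T: "c \<in> CN \<Longrightarrow> c \<notin> darts T"
proof
  assume c: "c \<in> CN" and cT: "c \<in> darts T"
  hence "c \<in> bT" using TN_CN_disjoint by blast
  hence "vk G c = Bdry" using cT by (simp add: glue_vk bdarts_def)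
  moreover have "c \<in> darts G" using c glue_darts by blast
  ultimately show False using no_Bdry by blast
qed

lemma CN_sig: "d \<in> CN \<Longrightarrow> sig C d \<in> CN"
  using C.sig_in by (auto simp: bdarts_def)

lemma cross_TN: "d \<in> darts T \<Longrightarrow> vk T d = Cross \<Longrightarrow> d \<in> TN"
  and cross_CN: "d \<in> darts C \<Longrightarrow> vk C d = Cross \<Longrightarrow> d \<in> CN"
  by (simp_all add: bdarts_def)

lemma G_on_T:
  assumes "d \<in> darts T"
  shows "sig G d = sig T d" "vk G d = vk T d" "dr G d = dr T d" "thick G d = thick T d"
    "over G d = over T d"
  using assms by (simp_all add: glue_sig glue_vk glue_dr glue_thick glue_over)

lemma G_on_CN:
  assumes "d \<in> CN"
  shows "sig G d = sig C d" "vk G d = vk C d" "dr G d = dr C d" "thick G d = thick C d"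
    "over G d = over C d"
  using assms CN_not_T by (simp_all add: glue_sig glue_vk glue_dr glue_thick glue_over)

lemma proper_C: "proper_crossings C"
  unfolding proper_crossings_def
proof (intro ballI impI)
  fix d assume d: "d \<in> darts C" and c: "vk C d = Cross"
  have dN: "d \<in> CN" using cross_CN[OF d c] .
  have "sig C d \<in> CN" "sig C (sig C d) \<in> CN" "sig C (sig C (sig C d)) \<in> CN" using CN_sig dN by auto
  moreover have "d \<in> darts G" "vk G d = Cross" using dN glue_darts G_on_CN c by auto
  hence "sig G (sig G (sig G (sig G d))) = d \<and> sig G d \<noteq> d \<and> sig G (sig G d) \<noteq> d
     \<and> sig G (sig G (sig G d)) \<noteq> d \<and> dr G (sig G (sig G d)) = opp (dr G d) \<and> dr G d \<noteq> Unor"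
    using proper_glue by (simp add: proper_crossings_def)
  ultimately show "sig C (sig C (sig C (sig C d))) = d \<and> sig C d \<noteq> d \<and> sig C (sig C d) \<noteq> d
     \<and> sig C (sig C (sig C d)) \<noteq> d \<and> dr C (sig C (sig C d)) = opp (dr C d) \<and> dr C d \<noteq> Unor"
    using dN G_on_CN by simp
qed

lemma darts_Cs: "darts (Cs B) = (\<lambda>n. n + K) ` darts (smooth C B)"
  by (simp add: smoothed_ctx_def darts_shift_map)

lemma Cs_simps:
  "alph (Cs B) (n + K) = alph (smooth C B) n + K" "sig (Cs B) (n + K) = sig (smooth C B) n + K"
  "vk (Cs B) (n + K) = vk (smooth C B) n" "dr (Cs B) (n + K) = dr (smooth C B) n"
  "thick (Cs B) (n + K) = thick (smooth C B) n" "over (Cs B) (n + K) = over (smooth C B) n"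
  by (simp_all add: smoothed_ctx_def)

lemma vk_Cs_not_Cross: "vk (Cs B) n \<noteq> Cross"
  using smooth_vk_not_Cross by (simp add: smoothed_ctx_def shift_map_def)

lemma bdarts_Cs:
  assumes B: "B \<in> states C"
  shows "bdarts (Cs B) = (\<lambda>d. 2 * d + K) ` bC"
proof (intro equalityI subsetI)
  fix n assume "n \<in> bdarts (Cs B)"
  hence n: "n \<in> darts (Cs B)" "vk (Cs B) n = Bdry" by (auto simp: bdarts_def)
  then obtain k where k: "k \<in> darts (smooth C B)" "n = k + K" using darts_Cs by auto
  have vk: "vk (smooth C B) k = Bdry" using n k Cs_simps by simp
  show "n \<in> (\<lambda>d. 2 * d + K) ` bC"
  proof (rule smooth_darts_cases[OF k(1)])
    fix d assume d: "d \<in> darts C" "k = 2 * d"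
    hence "vk C d = Bdry" using vk by (auto split: if_splits)
    thus ?thesis using d k by (auto simp: bdarts_def)
  next
    fix x assume x: "x \<in> B" "k = Suc (2 * x)"
    have "vk C x = Cross" using x B by (auto simp: states_def)
    thus ?thesis using vk x by (simp split: if_splits)
  qed
next
  fix n assume "n \<in> (\<lambda>d. 2 * d + K) ` bC"
  then obtain d where d: "d \<in> darts C" "vk C d = Bdry" "n = 2 * d + K" by (auto simp: bdarts_def)
  thus "n \<in> bdarts (Cs B)" by (auto simp: bdarts_def darts_Cs Cs_simps[where n = "2 * d"])
qed

lemma bdarts_Cs_even: "B \<in> states C \<Longrightarrow> 2 * z + K \<in> bdarts (Cs B) \<longleftrightarrow> z \<in> bC"
  and bdarts_Cs_odd: "B \<in> states C \<Longrightarrow> Suc (2 * z) + K \<notin> bdarts (Cs B)"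
  using bdarts_Cs by auto

lemma glue_ok_Cs:
  assumes B: "B \<in> states C"
  shows "glue_ok T (Cs B) ms"
  unfolding glue_ok_def
proof (intro conjI)
  interpret smoothing C B using C.wf proper_C B by unfold_locales
  show "wf_map T" by (rule T.wf)
  show "wf_map (Cs B)" unfolding smoothed_ctx_def by (rule wf_map_shift_map[OF smooth_wf_map])
  show "\<exists>x\<in>bT. bT = orb (sig T) x" using glue_ok by (simp add: glue_ok_def)
  have "bij_betw (\<lambda>d. 2 * d + K) bC ((\<lambda>d. 2 * d + K) ` bC)" by (auto simp: bij_betw_def inj_on_def)
  thus "bij_betw ms bT (bdarts (Cs B))"
    unfolding bdarts_Cs[OF B] using bij_betw_trans[OF m_bij]
    by (simp add: comp_def shifted_match_def[abs_def])
  show "\<forall>x\<in>bT. sig (Cs B) (ms (sig T x)) = ms x"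
  proof
    fix x assume x: "x \<in> bT"
    have "sig T x \<in> bT" using x T.sig_in by (auto simp: bdarts_def)
    hence "vk C (m (sig T x)) = Bdry" using m_in by (simp add: bdarts_def)
    thus "sig (Cs B) (ms (sig T x)) = ms x"
      using m_sig[OF x] Cs_simps(2)[where n = "2 * m (sig T x)"] by (simp add: shifted_match_def)
  qed
  show "\<forall>x\<in>bT. alph T x \<notin> bT" using alph_bT by blast
  show "TN \<inter> (darts (Cs B) - bdarts (Cs B)) = {}"
    using K_bound by (auto simp: darts_Cs)
qed

lemma darts_GB: "darts (GB B) = TN \<union> (darts (Cs B) - bdarts (Cs B))"
  by (simp add: glue_darts)

lemma shifted_not_T: "k + K \<notin> darts T"
  using K_bound by fastforce

lemma GB_on_T:
  assumes "d \<in> darts T"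
  shows "sig (GB B) d = sig T d" "vk (GB B) d = vk T d" "dr (GB B) d = dr T d"
    "thick (GB B) d = thick T d" "over (GB B) d = over T d"
  using assms by (simp_all add: glue_sig glue_vk glue_dr glue_thick glue_over)

lemma GB_on_Cs:
  "sig (GB B) (k + K) = sig (smooth C B) k + K" "vk (GB B) (k + K) = vk (smooth C B) k"
  "dr (GB B) (k + K) = dr (smooth C B) k" "thick (GB B) (k + K) = thick (smooth C B) k"
  "over (GB B) (k + K) = over (smooth C B) k"
  using shifted_not_T[of k] by (simp_all add: glue_sig glue_vk glue_dr glue_thick glue_over Cs_simps)

lemma states_GB: "states (GB B) = states T"
proof (rule states_cong)
  show "crossings (GB B) = crossings T"
    using vk_Cs_not_Cross cross_TN by (auto simp: crossings_def darts_GB glue_vk)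
qed (simp_all add: crossings_def GB_on_T T.sig_in)

lemma minv_shifted_match: "minv T ms (2 * z + K) = minv T m z"
  by (simp add: minv_def shifted_match_def)

lemma alph_G_T: "d \<in> darts T \<Longrightarrow> alph G d = (if alph T d \<in> bT then
    (if alph C (m (alph T d)) \<in> bC then alph T (minv T m (alph C (m (alph T d))))
     else alph C (m (alph T d))) else alph T d)"
  by (simp add: glue_alph Let_def)

lemma alph_G_CN: "c \<in> CN \<Longrightarrow> alph G c = (if alph C c \<in> bC then alph T (minv T m (alph C c)) else alph C c)"
  using CN_not_T by (simp add: glue_alph Let_def)

lemma alph_GB_T:
  assumes B: "B \<in> states C" and d: "d \<in> darts T"
  shows "alph (GB B) d = (if alph T d \<in> bT then
    (if alph C (m (alph T d)) \<in> bC then alph T (minv T m (alph C (m (alph T d))))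
     else 2 * alph C (m (alph T d)) + K) else alph T d)"
proof -
  have "alph (Cs B) (ms (alph T d)) = 2 * alph C (m (alph T d)) + K"
    using Cs_simps(1)[where n = "2 * m (alph T d)"] by (simp add: shifted_match_def)
  thus ?thesis using d bdarts_Cs_even[OF B] minv_shifted_match by (simp add: glue_alph Let_def)
qed

lemma alph_GB_even:
  assumes B: "B \<in> states C"
  shows "alph (GB B) (2 * c + K) = (if alph C c \<in> bC then alph T (minv T m (alph C c)) else 2 * alph C c + K)"
proof -
  have "alph (Cs B) (2 * c + K) = 2 * alph C c + K" using Cs_simps(1)[where n = "2 * c"] by simp
  thus ?thesis using shifted_not_T[of "2 * c"] bdarts_Cs_even[OF B] minv_shifted_match
    by (simp add: glue_alph Let_def)
qed

lemma alph_GB_odd: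
  assumes B: "B \<in> states C"
  shows "alph (GB B) (Suc (2 * y) + K) = Suc (2 * sig C (sig C y)) + K"
proof -
  have "alph (Cs B) (Suc (2 * y) + K) = Suc (2 * sig C (sig C y)) + K"
    using Cs_simps(1)[where n = "Suc (2 * y)"] by simp
  thus ?thesis using shifted_not_T[of "Suc (2 * y)"] bdarts_Cs_odd[OF B] by (simp add: glue_alph Let_def)
qed

lemma interior_Cs:
  assumes B: "B \<in> states C"
  shows "darts (Cs B) - bdarts (Cs B) = (\<lambda>c. 2 * c + K) ` CN \<union> (\<lambda>y. Suc (2 * y) + K) ` B"
proof (intro equalityI subsetI)
  fix n assume n: "n \<in> darts (Cs B) - bdarts (Cs B)"
  then obtain k where k: "k \<in> darts (smooth C B)" "n = k + K" using darts_Cs by auto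
  have nb: "n \<notin> (\<lambda>d. 2 * d + K) ` bC" using n bdarts_Cs[OF B] by blast
  show "n \<in> (\<lambda>c. 2 * c + K) ` CN \<union> (\<lambda>y. Suc (2 * y) + K) ` B"
    by (rule smooth_darts_cases[OF k(1)]) (use k nb in auto)
next
  fix n assume "n \<in> (\<lambda>c. 2 * c + K) ` CN \<union> (\<lambda>y. Suc (2 * y) + K) ` B"
  thus "n \<in> darts (Cs B) - bdarts (Cs B)"
    using bdarts_Cs_even[OF B] bdarts_Cs_odd[OF B] by (auto simp: darts_Cs smooth_darts)
qed

abbreviation "\<chi> \<equiv> smooth_glue_map (darts T) K"

lemma smooth_glue_map_T [simp]:
  "t \<in> darts T \<Longrightarrow> \<chi> (2 * t) = 2 * t" "t \<in> darts T \<Longrightarrow> \<chi> (Suc (2 * t)) = Suc (2 * t)"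
  and smooth_glue_map_not_T [simp]:
  "t \<notin> darts T \<Longrightarrow> \<chi> (2 * t) = double (2 * t + K)"
  "t \<notin> darts T \<Longrightarrow> \<chi> (Suc (2 * t)) = double (Suc (2 * t) + K)"
  by (simp_all add: smooth_glue_map_def)

context
  fixes A B
  assumes A: "A \<in> states T" and B: "B \<in> states C"
begin

abbreviation "S1 \<equiv> smooth G (A \<union> B)"
abbreviation "S2 \<equiv> smooth (GB B) A"

lemma state_A: "x \<in> A \<Longrightarrow> x \<in> darts T \<and> vk T x = Cross"
  and state_B: "y \<in> B \<Longrightarrow> y \<in> CN \<and> vk C y = Cross"
  using A B by (auto simp: states_def bdarts_def)

lemma B_not_T: "y \<in> B \<Longrightarrow> y \<notin> darts T"
  using state_B CN_not_T by blast

lemma smA_G_T: "e \<in> darts T \<Longrightarrow> smA G e = smA T e"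
  by (rule smA_cong[where S = "darts T"]) (simp_all add: T.sig_in G_on_T)

lemma smA_GB_T: "e \<in> darts T \<Longrightarrow> smA (GB B) e = smA T e"
  by (rule smA_cong[where S = "darts T"]) (simp_all add: T.sig_in GB_on_T)

lemma smA_G_CN: "e \<in> CN \<Longrightarrow> smA G e = smA C e"
  by (rule smA_cong[where S = CN]) (use CN_sig G_on_CN in auto)

lemma firstd_T: "t \<in> darts T \<Longrightarrow> firstd G (A \<union> B) t = firstd (GB B) A t \<and> firstd (GB B) A t \<in> darts T"
  using B_not_T T.sig_in G_on_T GB_on_T by (auto simp: firstd_eq)

lemma firstd_CN: "c \<in> CN \<Longrightarrow> firstd G (A \<union> B) c = firstd C B c \<and> firstd C B c \<in> CN"
  using state_A CN_not_T CN_sig G_on_CN by (auto simp: firstd_eq)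

lemma vk_GB_Cs: "vk (GB B) (k + K) = vk (smooth C B) k" "vk (GB B) (k + K) \<noteq> Cross"
  using GB_on_Cs(2)[of B k] smooth_vk_not_Cross[of C B k] by simp_all

lemma vk_S1_T: "t \<in> darts T \<Longrightarrow> vk S1 (2 * t) = vk S2 (2 * t) \<and> vk S1 (Suc (2 * t)) = vk S2 (Suc (2 * t))"
  using firstd_T smA_G_T smA_GB_T G_on_T GB_on_T by simp

lemma vk_S1_CN: "c \<in> CN \<Longrightarrow> vk S1 (2 * c) = vk S2 (double (2 * c + K))"
proof -
  assume c: "c \<in> CN"
  have "vk S2 (double (2 * c + K)) = vk (smooth C B) (2 * c)"
    unfolding smooth_double_simps(3) using vk_GB_Cs[of "2 * c"] by (simp only: if_False)
  thus ?thesis using c firstd_CN smA_G_CN G_on_CN by simp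
qed

lemma vk_S1_B: "y \<in> B \<Longrightarrow> vk S1 (Suc (2 * y)) = vk S2 (double (Suc (2 * y) + K))"
proof -
  assume y: "y \<in> B"
  hence c: "y \<in> CN" using state_B by blast
  have "vk S2 (double (Suc (2 * y) + K)) = vk (smooth C B) (Suc (2 * y))"
    unfolding smooth_double_simps(3) using vk_GB_Cs[of "Suc (2 * y)"] by (simp only: if_False)
  thus ?thesis using c firstd_CN smA_G_CN G_on_CN by simp
qed

lemma smooth_glue_map_bij: "bij_betw \<chi> (darts S1) (darts S2)"
proof -
  have "\<chi> ` darts S1 = (\<lambda>d. 2 * d) ` TN \<union> (\<lambda>c. 2 * (2 * c + K)) ` CN \<union>
      (\<lambda>x. 2 * x + 1) ` A \<union> (\<lambda>y. 2 * (Suc (2 * y) + K)) ` B"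
    unfolding smooth_darts glue_darts image_Un image_image using CN_not_T state_A B_not_T
    by (auto simp: image_iff smooth_glue_map_def double_def)
  also have "\<dots> = darts S2"
    unfolding smooth_darts darts_GB interior_Cs[OF B] image_Un image_image by blast
  finally have "\<chi> ` darts S1 = darts S2" .
  moreover have "inj_on \<chi> (darts S1)"
  proof (rule inj_onI)
    fix n1 n2 assume "\<chi> n1 = \<chi> n2"
    thus "n1 = n2" using shifted_not_T
      by (cases "n1 div 2 \<in> darts T"; cases "n2 div 2 \<in> darts T")
        (auto simp: smooth_glue_map_def double_def)
  qed
  ultimately show ?thesis by (simp add: bij_betw_def)
qed

lemma isom_at_T_even:
  assumes t: "d \<in> darts T"
  shows "isom_at \<chi> S1 S2 (2 * d)"
proof -
  have al: "\<chi> (2 * alph G d) = 2 * alph (GB B) d"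
  proof (cases "alph T d \<in> bT")
    case False thus ?thesis using t T.alph_in alph_G_T alph_GB_T[OF B] by simp
  next
    case bd: True
    show ?thesis
    proof (cases "alph C (m (alph T d)) \<in> bC")
      case True
      hence "alph T (minv T m (alph C (m (alph T d)))) \<in> darts T"
        using minv_in bdarts_in T.alph_in by blast
      thus ?thesis using t bd True alph_G_T alph_GB_T[OF B] by simp
    next
      case False
      have "alph C (m (alph T d)) \<in> CN" using C.alph_in bdarts_in(2) m_in bd False by blast
      hence "alph C (m (alph T d)) \<notin> darts T" using CN_not_T by blast
      thus ?thesis using t bd False alph_G_T alph_GB_T[OF B] by (simp add: double_def)
    qed
  qed
  have "sig T d \<in> darts T" "sig T (sig T d) \<in> darts T" "sig T (sig T (sig T d)) \<in> darts T"
    using T.sig_in t by auto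
  thus ?thesis unfolding isom_at_def
    using t al vk_S1_T[OF t] B_not_T G_on_T GB_on_T by auto
qed

lemma isom_at_CN_even:
  assumes c: "d \<in> CN"
  shows "isom_at \<chi> S1 S2 (2 * d)"
proof -
  have sC: "sig C d \<in> CN" "sig C (sig C d) \<in> CN" "sig C (sig C (sig C d)) \<in> CN"
    using CN_sig c by auto
  have dT: "d \<notin> darts T" "d \<notin> A" using CN_not_T c state_A by auto
  have cn: "\<chi> (2 * d) = double (2 * d + K)" using dT by simp
  have al: "\<chi> (alph S1 (2 * d)) = alph S2 (\<chi> (2 * d))"
  proof -
    have r: "alph S2 (\<chi> (2 * d)) =
        2 * (if alph C d \<in> bC then alph T (minv T m (alph C d)) else 2 * alph C d + K)"
      unfolding cn smooth_double_simps(1) using alph_GB_even[OF B] by simp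
    show ?thesis
    proof (cases "alph C d \<in> bC")
      case True
      hence "alph T (minv T m (alph C d)) \<in> darts T" using minv_in bdarts_in T.alph_in by blast
      thus ?thesis using r True alph_G_CN[OF c] by simp
    next
      case False
      hence "alph C d \<notin> darts T" using C.alph_in c CN_not_T by blast
      thus ?thesis using r False alph_G_CN[OF c] by (simp add: double_def)
    qed
  qed
  have "sig S2 (\<chi> (2 * d)) = double (sig (GB B) (2 * d + K))"
    unfolding cn by (rule smooth_double_simps(2)[OF vk_GB_Cs(2)])
  also have "\<dots> = double (sig (smooth C B) (2 * d) + K)" using GB_on_Cs(1)[of B "2 * d"] by simp
  finally have sg: "\<chi> (sig S1 (2 * d)) = sig S2 (\<chi> (2 * d))"
    using c sC dT CN_not_T G_on_CN by simp
  have "dr S2 (\<chi> (2 * d)) = dr S1 (2 * d)" "thick S2 (\<chi> (2 * d)) = thick S1 (2 * d)"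
    unfolding cn smooth_double_simps using c G_on_CN GB_on_Cs[of B "2 * d"] by simp_all
  thus ?thesis unfolding isom_at_def using al sg vk_S1_CN[OF c] cn by simp
qed

lemma isom_at_A_odd:
  assumes x: "x \<in> A"
  shows "isom_at \<chi> S1 S2 (Suc (2 * x))"
proof -
  have t: "x \<in> darts T" using state_A x by blast
  have "sig T x \<in> darts T" "sig T (sig T x) \<in> darts T" using T.sig_in t by auto
  thus ?thesis unfolding isom_at_def using t vk_S1_T[OF t] G_on_T GB_on_T by simp
qed

lemma isom_at_B_odd:
  assumes y: "y \<in> B"
  shows "isom_at \<chi> S1 S2 (Suc (2 * y))"
proof -
  have c: "y \<in> CN" and yT: "y \<notin> darts T" using state_B y CN_not_T by auto
  have sC: "sig C y \<in> CN" "sig C (sig C y) \<in> CN" using CN_sig c by auto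
  have cn: "\<chi> (Suc (2 * y)) = double (Suc (2 * y) + K)" using yT by simp
  have "alph S2 (\<chi> (Suc (2 * y))) = 2 * (Suc (2 * sig C (sig C y)) + K)"
    unfolding cn smooth_double_simps(1) using alph_GB_odd[OF B] by simp
  hence al: "\<chi> (alph S1 (Suc (2 * y))) = alph S2 (\<chi> (Suc (2 * y)))"
    using c sC CN_not_T G_on_CN by (simp add: double_def)
  have "sig S2 (\<chi> (Suc (2 * y))) = double (sig (GB B) (Suc (2 * y) + K))"
    unfolding cn by (rule smooth_double_simps(2)[OF vk_GB_Cs(2)])
  also have "\<dots> = double (2 * y + K)" using GB_on_Cs(1)[of B "Suc (2 * y)"] by simp
  finally have sg: "\<chi> (sig S1 (Suc (2 * y))) = sig S2 (\<chi> (Suc (2 * y)))" using yT by simp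
  have "dr S2 (\<chi> (Suc (2 * y))) = dr S1 (Suc (2 * y))"
    "thick S2 (\<chi> (Suc (2 * y))) = thick S1 (Suc (2 * y))"
    unfolding cn smooth_double_simps using c sC G_on_CN GB_on_Cs[of B "Suc (2 * y)"] by simp_all
  thus ?thesis unfolding isom_at_def using al sg vk_S1_B[OF y] cn by simp
qed

lemma smooth_glue_isom: "isom \<chi> S1 S2"
  unfolding isom_def
proof (intro conjI ballI smooth_glue_map_bij)
  fix n assume "n \<in> darts S1"
  thus "isom_at \<chi> S1 S2 n"
    by (rule smooth_darts_cases)
      (auto simp: glue_darts intro: isom_at_T_even isom_at_CN_even isom_at_A_odd isom_at_B_odd)
qed

end

lemma crossings_glue: "crossings G = crossings T \<union> crossings C"
  using cross_TN cross_CN CN_not_T by (auto simp: crossings_def glue_darts G_on_T G_on_CN)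

lemma crossings_T_C_disjoint: "crossings T \<inter> crossings C = {}"
  using cross_CN CN_not_T by (auto simp: crossings_def)

lemma states_glue:
  "F \<in> states G \<longleftrightarrow> F \<subseteq> crossings T \<union> crossings C \<and> F \<inter> crossings T \<in> states T
     \<and> F \<inter> crossings C \<in> states C"
proof -
  have "state_on (crossings T) (sig G) A = state_on (crossings T) (sig T) A" for A
    by (rule state_on_cong) (use G_on_T T.sig_crossings in \<open>auto simp: crossings_def\<close>)
  moreover have "state_on (crossings C) (sig G) B = state_on (crossings C) (sig C) B" for B
    by (rule state_on_cong)
      (use cross_CN G_on_CN C.sig_crossings in \<open>auto simp: crossings_def\<close>)
  moreover have "state_on (crossings T \<union> crossings C) (sig G) F \<longleftrightarrow> F \<subseteq> crossings T \<union> crossings C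
      \<and> state_on (crossings T) (sig G) (F \<inter> crossings T) \<and> state_on (crossings C) (sig G) (F \<inter> crossings C)"
    by (rule state_on_Un[OF crossings_T_C_disjoint])
      (use cross_CN G_on_T G_on_CN T.sig_crossings C.sig_crossings in \<open>auto simp: crossings_def\<close>)
  ultimately show ?thesis unfolding states_eq_state_on crossings_glue by simp
qed

lemma states_crossings: "F \<in> states M \<Longrightarrow> F \<subseteq> crossings M"
  by (auto simp: states_def crossings_def)

lemma states_glue_Un:
  assumes A: "A \<in> states T" and B: "B \<in> states C"
  shows "A \<union> B \<in> states G"
proof -
  have "(A \<union> B) \<inter> crossings T = A" "(A \<union> B) \<inter> crossings C = B"
    using states_crossings[OF A] states_crossings[OF B] crossings_T_C_disjoint by blast+
  moreover have "A \<union> B \<subseteq> crossings T \<union> crossings C"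
    using states_crossings[OF A] states_crossings[OF B] by blast
  ultimately show ?thesis unfolding states_glue using A B by simp
qed

lemma sum_states_glue:
  "(\<Sum>F\<in>states G. f F) = (\<Sum>B\<in>states C. \<Sum>A\<in>states T. f (A \<union> B))"
proof -
  have bij: "bij_betw (\<lambda>(B, A). A \<union> B) (states C \<times> states T) (states G)"
  proof (rule bij_betw_byWitness[where f' = "\<lambda>F. (F \<inter> crossings C, F \<inter> crossings T)"])
    show "\<forall>p\<in>states C \<times> states T. (\<lambda>F. (F \<inter> crossings C, F \<inter> crossings T)) ((\<lambda>(B, A). A \<union> B) p) = p"
      using states_crossings crossings_T_C_disjoint by fastforce
    show "\<forall>F\<in>states G. (\<lambda>(B, A). A \<union> B) ((\<lambda>F. (F \<inter> crossings C, F \<inter> crossings T)) F) = F"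
      using states_glue by auto
    show "(\<lambda>(B, A). A \<union> B) ` (states C \<times> states T) \<subseteq> states G"
      using states_glue_Un by auto
    show "(\<lambda>F. (F \<inter> crossings C, F \<inter> crossings T)) ` states G \<subseteq> states C \<times> states T"
      using states_glue by auto
  qed
  have "(\<Sum>F\<in>states G. f F) = (\<Sum>p\<in>states C \<times> states T. f ((\<lambda>(B, A). A \<union> B) p))"
    using sum.reindex_bij_betw[OF bij, of f] by simp
  also have "\<dots> = (\<Sum>B\<in>states C. \<Sum>A\<in>states T. f (A \<union> B))"
    using finite_states[OF C.wf] finite_states[OF T.wf] by (simp add: sum.cartesian_product split_def)
  finally show ?thesis .
qed

lemma is_lg_smooth_glue_pair:
  assumes A: "A \<in> states T" and B: "B \<in> states C"
  shows "is_lg (smooth G (A \<union> B))" "is_lg (smooth (GB B) A)"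
    "iso (smooth G (A \<union> B)) (smooth (GB B) A)"
proof -
  show lg: "is_lg (smooth G (A \<union> B))" using lg_glue states_glue_Un[OF A B] by blast
  interpret dmap_isom "smooth G (A \<union> B)" \<chi> "smooth (GB B) A"
    using smooth_glue_isom[OF A B] lg by unfold_locales (simp add: is_lg_def)
  show "is_lg (smooth (GB B) A)" using is_lg_target[OF lg] .
  show "iso (smooth G (A \<union> B)) (smooth (GB B) A)"
    using smooth_glue_isom[OF A B] by (auto simp: iso_iff_isom)
qed

lemma lbracket_glue_decompose:
  "SG_eq s1 s2 ht or3 (lbracket G) (\<Sum>B\<in>states C. lbracket (GB B))"
proof -
  have "lbracket G = (\<Sum>B\<in>states C. \<Sum>A\<in>states T. gen (smooth G (A \<union> B)))"
    unfolding lbracket_def by (rule sum_states_glue)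
  moreover have "lbracket (GB B) = (\<Sum>A\<in>states T. gen (smooth (GB B) A))" for B
    unfolding lbracket_def states_GB ..
  ultimately show ?thesis
    using is_lg_smooth_glue_pair by (simp add: SG_eq_sum SG_eq_iso)
qed

end

lemma glued_kd_of_iso:
  assumes k: "is_kd M" and i: "iso M (glue T C m)" and ok: "glue_ok T C m"
    and K: "\<And>d. d \<in> darts T \<Longrightarrow> d < K"
  shows "glued_kd T C m K"
proof -
  obtain \<phi> where \<phi>: "isom \<phi> M (glue T C m)" using i by (auto simp: iso_iff_isom)
  interpret dmap_isom M \<phi> "glue T C m" using \<phi> is_kd_wf_map[OF k] by unfold_locales
  show ?thesis
  proof
    show "glue_ok T C m" by (rule ok)
    show "proper_crossings (glue T C m)" by (rule proper_crossings_target[OF is_kd_proper_crossings[OF k]])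
    show "vk (glue T C m) d \<noteq> Bdry" if "d \<in> darts (glue T C m)" for d
      using that k by (auto elim!: target_darts_cases simp: is_kd_def)
    show "is_lg (smooth (glue T C m) F)" if "F \<in> states (glue T C m)" for F
      by (rule is_lg_smooth_target[OF is_lg_smooth[OF k] that])
    show "d < K" if "d \<in> darts T" for d using K that .
  qed
qed

lemma lbracket_rmove:
  assumes k: "is_kd M" and k': "is_kd M'" and TT': "(T, T') \<in> chosen_moves s1 s2 ht or3"
    and r: "rmove T T' M M'"
  shows "SG_eq s1 s2 ht or3 (lbracket M) (lbracket M')"
proof -
  obtain C m where ok: "glue_ok T C m" and ok': "glue_ok T' C m"
    and i: "iso M (glue T C m)" and i': "iso M' (glue T' C m)"
    using r by (auto simp: rmove_def)
  have "finite (darts T \<union> darts T')" using ok ok' by (auto simp: glue_ok_def wf_map_def)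
  then obtain K where K: "\<And>d. d \<in> darts T \<union> darts T' \<Longrightarrow> d < K"
    by (metis finite_nat_set_iff_bounded)
  interpret T: glued_kd T C m K by (rule glued_kd_of_iso[OF k i ok]) (use K in blast)
  interpret T': glued_kd T' C m K by (rule glued_kd_of_iso[OF k' i' ok']) (use K in blast)
  have "SG_eq s1 s2 ht or3 (lbracket M) (\<Sum>B\<in>states C. lbracket (T.GB B))"
    using lbracket_iso[OF i k] T.lbracket_glue_decompose by (rule SG_eq_trans)
  also have "SG_eq s1 s2 ht or3 \<dots> (\<Sum>B\<in>states C. lbracket (T'.GB B))"
  proof (rule SG_eq_sum)
    fix B assume B: "B \<in> states C"
    show "SG_eq s1 s2 ht or3 (lbracket (T.GB B)) (lbracket (T'.GB B))"
      unfolding SG_eq_def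
    proof (rule lrel.rel_loc[OF TT' T.glue_ok_Cs[OF B] T'.glue_ok_Cs[OF B]])
      show "\<forall>d\<in>darts (smoothed_ctx K C B). vk (smoothed_ctx K C B) d \<noteq> Cross"
        using T.vk_Cs_not_Cross by blast
      show "\<forall>F\<in>states (T.GB B). is_lg (smooth (T.GB B) F)"
        using T.is_lg_smooth_glue_pair B T.states_GB by blast
      show "\<forall>F\<in>states (T'.GB B). is_lg (smooth (T'.GB B) F)"
        using T'.is_lg_smooth_glue_pair B T'.states_GB by blast
    qed
  qed
  also have "SG_eq s1 s2 ht or3 \<dots> (lbracket M')"
    using T'.lbracket_glue_decompose lbracket_iso[OF i' k'] by (blast intro: SG_eq_trans SG_eq_sym)
  finally show ?thesis .
qed

lemma lbracket_kd_step:
  "kd_step (chosen_moves s1 s2 ht or3) M M' \<Longrightarrow> SG_eq s1 s2 ht or3 (lbracket M) (lbracket M')"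
  unfolding kd_step_def using lbracket_iso lbracket_subdiv lbracket_rmove by blast

theorem theorem8:
  fixes D D' :: dmap and s1 s2 :: bool and ht :: "nat \<Rightarrow> nat" and or3 :: "nat \<Rightarrow> bool"
  assumes "heights_ok ht"
    and "generating s1 s2 ht or3"
    and "is_kd D" and "no_marks D"
    and "is_kd D'" and "no_marks D'"
    and "same_sph_knotoid D D'"
  shows "SG_eq s1 s2 ht or3 (lbracket D) (lbracket D')"
proof -
  have "equivclp (kd_step (chosen_moves s1 s2 ht or3)) D D'"
    using assms(2,7) by (simp add: generating_def)
  thus ?thesis
  proof (induction rule: equivclp_induct)
    case (step M M')
    thus ?case using lbracket_kd_step by (blast intro: SG_eq_trans SG_eq_sym)
  qed simp
qed

end
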